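(* Let $3\le n<\omega$ and let $M\le_{\mathbf{K}^n}N$ be models of $\mathbf{K}^n$ of cardinality at most $\aleph_{n-3}$. Let $M^*$ be the standard model on $I(M)$ and $N^*$ the standard model on $I(N)$. Then there is an isomorphism $f:N\cong N^*$ which is the identity on $I(N)$ and which restricts to an isomorphism $M\cong M^*$ (the identity on $I(M)$).
   Context: Hart–Shelah class $\mathbf{K}^n$ ($n\ge2$): models $M$ with sorts $I(M)$ (index set), $K(M)=[I(M)]^n$ with membership, $H\cong\mathbb{Z}_2$, $G(M)=\bigoplus_{u\in K}\mathbb{Z}_2$ with evaluation and support functions, $G^*(M)$ with projection onto $K$ and a regular $G$-action on each stalk $G^*_u$, $H^*(M)$ with projection onto $K$ and a regular $\mathbb{Z}_2$-action on each stalk, and $Q\subseteq(G^* )^n\times H^*$ symmetric in the first $n$ arguments, holding only on compatible stalk indices (all $n$-subsets of one $(n+1)$-subset of $I$), such that moving $x_\ell$ by $\gamma_\ell\in G$ and $y\in H^*_v$ by $m\in\mathbb{Z}_2$ preserves the truth value of $Q$ iff $\gamma_1(v)+\dots+\gamma_n(v)+m\equiv0\pmod2$. It is $\mathbb{L}_{\omega_1,\omega}$-axiomatizable and ordered by $\mathbb{L}_{\omega_1,\omega}$-elementary substructure $\le_{\mathbf{K}^n}$. For an index set $I$, the standard model for $I$ is the unique $M\in\mathbf{K}^n$ with $I(M)=I$ such that $G^*(M)=K\times G$ where $K=[I]^n$ and $G=\bigoplus_{u\in K}\mathbb{Z}_2$ (i.e. each stalk $G^*_u$ is literally $\{u\}\times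 G$ with $G$ acting by translation). *)

theory Defs
  imports Main "HOL-Library.FuncSet" "HOL-Library.Multiset"
begin

record ('a, 'r) rstr =
  univ :: "'a set"
  rel  :: "'r \<Rightarrow> 'a list \<Rightarrow> bool"

text \<open>Formulas of L_{omega_1,omega} over a relational vocabulary 'r (with equality):
  variables are natural numbers, conjunctions are countable (indexed by nat).\<close>
datatype 'r fm =
    FEq nat nat
  | FRel 'r "nat list"
  | FNeg "'r fm"
  | FConj "nat \<Rightarrow> 'r fm"
  | FEx nat "'r fm"

primrec fv :: "'r fm \<Rightarrow> nat set" where
  "fv (FEq i j) = {i, j}"
| "fv (FRel r vs) = set vs"
| "fv (FNeg \<phi>) = fv \<phi>"
| "fv (FConj F) = (\<Union>k. fv (F k))"
| "fv (FEx x \<phi>) = fv \<phi> - {x}"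

primrec wf_fm :: "'r fm \<Rightarrow> bool" where
  "wf_fm (FEq i j) = True"
| "wf_fm (FRel r vs) = True"
| "wf_fm (FNeg \<phi>) = wf_fm \<phi>"
| "wf_fm (FConj F) = ((\<forall>k. wf_fm (F k)) \<and> finite (\<Union>k. fv (F k)))"
| "wf_fm (FEx x \<phi>) = wf_fm \<phi>"

primrec sat :: "('a, 'r) rstr \<Rightarrow> 'r fm \<Rightarrow> (nat \<Rightarrow> 'a) \<Rightarrow> bool" where
  "sat M (FEq i j) s = (s i = s j)"
| "sat M (FRel r vs) s = rel M r (map s vs)"
| "sat M (FNeg \<phi>) s = (\<not> sat M \<phi> s)"
| "sat M (FConj F) s = (\<forall>k. sat M (F k) s)"
| "sat M (FEx x \<phi>) s = (\<exists>a\<in>univ M. sat M \<phi> (s(x := a)))"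

definition elem_sub :: "('a, 'r) rstr \<Rightarrow> ('a, 'r) rstr \<Rightarrow> bool" where
  "elem_sub M N \<longleftrightarrow> univ M \<subseteq> univ N \<and>
     (\<forall>\<phi> s. wf_fm \<phi> \<and> (\<forall>k. s k \<in> univ M) \<longrightarrow> (sat M \<phi> s \<longleftrightarrow> sat N \<phi> s))"

definition iso :: "('a \<Rightarrow> 'b) \<Rightarrow> ('a, 'r) rstr \<Rightarrow> ('b, 'r) rstr \<Rightarrow> bool" where
  "iso f M N \<longleftrightarrow> bij_betw f (univ M) (univ N) \<and>
     (\<forall>r xs. set xs \<subseteq> univ M \<longrightarrow> (rel M r xs \<longleftrightarrow> rel N r (map f xs)))"

text \<open>le_aleph k A  means  |A| <= aleph_k  (aleph_0 = natLeq, aleph_{k+1} = cardSuc aleph_k).\<close>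
fun le_aleph :: "nat \<Rightarrow> 'a set \<Rightarrow> bool" where
  "le_aleph 0 A = ((card_of A, natLeq) \<in> ordLeq)"
| "le_aleph (Suc k) A = (\<exists>B. le_aleph k B \<and> (card_of A, cardSuc (card_of B)) \<in> ordLeq)"

section \<open>The Hart--Shelah vocabulary (one-sorted, relational rendering)\<close>

datatype hs_sym =
    SI | SK | SH | SG | SGs | SHs   \<comment> \<open>sort predicates I, K, H, G, G*, H*\<close>
  | SMem      \<comment> \<open>i \<in> u  (i in I, u in K)\<close>
  | SHAdd     \<comment> \<open>graph of addition on H\<close>
  | SGAdd     \<comment> \<open>graph of addition on G\<close>
  | SEv       \<comment> \<open>graph of evaluation G x K -> H\<close>
  | SSupp     \<comment> \<open>u in support of gamma\<close>
  | SPG       \<comment> \<open>graph of projection G* -> K\<close>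
  | SActG     \<comment> \<open>graph of action G x G* -> G*\<close>
  | SPH       \<comment> \<open>graph of projection H* -> K\<close>
  | SActH     \<comment> \<open>graph of action H x H* -> H*\<close>
  | SQ        \<comment> \<open>Q subset (G* )^n x H*\<close>

fun hs_arity :: "nat \<Rightarrow> hs_sym \<Rightarrow> nat" where
  "hs_arity n SI = 1" | "hs_arity n SK = 1" | "hs_arity n SH = 1" | "hs_arity n SG = 1"
| "hs_arity n SGs = 1" | "hs_arity n SHs = 1" | "hs_arity n SMem = 2" | "hs_arity n SHAdd = 3"
| "hs_arity n SGAdd = 3" | "hs_arity n SEv = 3" | "hs_arity n SSupp = 2" | "hs_arity n SPG = 2"
| "hs_arity n SActG = 3" | "hs_arity n SPH = 2" | "hs_arity n SActH = 3" | "hs_arity n SQ = n + 1"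

definition sortset :: "('a, hs_sym) rstr \<Rightarrow> hs_sym \<Rightarrow> 'a set" where
  "sortset M S = {x. rel M S [x]}"

definition nsubsets :: "nat \<Rightarrow> 'i set \<Rightarrow> 'i set set" where
  "nsubsets n I = {w. w \<subseteq> I \<and> finite w \<and> card w = n}"

definition compat_idx :: "nat \<Rightarrow> 'i set \<Rightarrow> 'i set list \<Rightarrow> 'i set \<Rightarrow> bool" where
  "compat_idx n I us v \<longleftrightarrow> (\<exists>w. w \<subseteq> I \<and> finite w \<and> card w = n + 1 \<and>
      set us \<union> {v} = nsubsets n w)"

definition graph1 :: "('a, hs_sym) rstr \<Rightarrow> hs_sym \<Rightarrow> 'a set \<Rightarrow> 'a set \<Rightarrow> ('a \<Rightarrow> 'a) \<Rightarrow> bool" where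
  "graph1 M S A B f \<longleftrightarrow> (\<forall>a b. rel M S [a, b] \<longleftrightarrow> a \<in> A \<and> b = f a) \<and> (\<forall>a\<in>A. f a \<in> B)"

definition graph2 :: "('a, hs_sym) rstr \<Rightarrow> hs_sym \<Rightarrow> 'a set \<Rightarrow> 'a set \<Rightarrow> 'a set
                       \<Rightarrow> ('a \<Rightarrow> 'a \<Rightarrow> 'a) \<Rightarrow> bool" where
  "graph2 M S A B C f \<longleftrightarrow> (\<forall>a b c. rel M S [a, b, c] \<longleftrightarrow> a \<in> A \<and> b \<in> B \<and> c = f a b)
      \<and> (\<forall>a\<in>A. \<forall>b\<in>B. f a b \<in> C)"

definition in_Kn :: "nat \<Rightarrow> ('a, hs_sym) rstr \<Rightarrow> bool" where
  "in_Kn n M \<longleftrightarrow>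
   (let I = sortset M SI; K = sortset M SK; H = sortset M SH; G = sortset M SG;
        Gs = sortset M SGs; Hs = sortset M SHs;
        sorts = {SI, SK, SH, SG, SGs, SHs};
        \<kappa> = (\<lambda>u. {i\<in>I. rel M SMem [i, u]}) in
   \<comment> \<open>arities; relations live on the universe\<close>
   (\<forall>S xs. rel M S xs \<longrightarrow> length xs = hs_arity n S \<and> set xs \<subseteq> univ M) \<and>
   \<comment> \<open>the universe is the disjoint union of the sorts\<close>
   (\<forall>x\<in>univ M. \<exists>S\<in>sorts. rel M S [x]) \<and>
   (\<forall>x\<in>univ M. \<forall>S\<in>sorts. \<forall>T\<in>sorts. rel M S [x] \<and> rel M T [x] \<longrightarrow> S = T) \<and>
   \<comment> \<open>K = [I]^n with membership\<close>
   (\<forall>i u. rel M SMem [i, u] \<longrightarrow> i \<in> I \<and> u \<in> K) \<and>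
   bij_betw \<kappa> K (nsubsets n I) \<and>
   (\<exists>z e hadd gadd ev pg actg ph acth.
      \<comment> \<open>H is Z_2 (z = 0, e = 1)\<close>
      H = {z, e} \<and> z \<noteq> e \<and> graph2 M SHAdd H H H hadd \<and>
      (\<forall>a\<in>H. \<forall>b\<in>H. hadd a b = (if a = b then z else e)) \<and>
      \<comment> \<open>G is the direct sum of copies of Z_2 indexed by K, via evaluation\<close>
      graph2 M SGAdd G G G gadd \<and> graph2 M SEv G K H ev \<and>
      (\<forall>\<gamma>\<in>G. \<forall>\<delta>\<in>G. \<forall>u\<in>K. ev (gadd \<gamma> \<delta>) u = hadd (ev \<gamma> u) (ev \<delta> u)) \<and>
      bij_betw (\<lambda>\<gamma>. restrict (ev \<gamma>) K) G {\<phi>\<in>K \<rightarrow>\<^sub>E H. finite {u\<in>K. \<phi> u \<noteq> z}} \<and>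
      (\<forall>\<gamma> u. rel M SSupp [\<gamma>, u] \<longleftrightarrow> \<gamma> \<in> G \<and> u \<in> K \<and> ev \<gamma> u = e) \<and>
      \<comment> \<open>G*: projection onto K, regular G-action on each stalk\<close>
      graph1 M SPG Gs K pg \<and> graph2 M SActG G Gs Gs actg \<and>
      (\<forall>\<gamma>\<in>G. \<forall>x\<in>Gs. pg (actg \<gamma> x) = pg x) \<and>
      (\<forall>\<gamma>\<in>G. \<forall>\<delta>\<in>G. \<forall>x\<in>Gs. actg (gadd \<gamma> \<delta>) x = actg \<gamma> (actg \<delta> x)) \<and>
      (\<forall>u\<in>K. \<exists>x\<in>Gs. pg x = u) \<and>
      (\<forall>x\<in>Gs. \<forall>y\<in>Gs. pg x = pg y \<longrightarrow> (\<exists>!\<gamma>. \<gamma> \<in> G \<and> actg \<gamma> x = y)) \<and>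
      \<comment> \<open>H*: projection onto K, regular Z_2-action on each stalk\<close>
      graph1 M SPH Hs K ph \<and> graph2 M SActH H Hs Hs acth \<and>
      (\<forall>m\<in>H. \<forall>y\<in>Hs. ph (acth m y) = ph y) \<and>
      (\<forall>m\<in>H. \<forall>m'\<in>H. \<forall>y\<in>Hs. acth (hadd m m') y = acth m (acth m' y)) \<and>
      (\<forall>u\<in>K. \<exists>y\<in>Hs. ph y = u) \<and>
      (\<forall>x\<in>Hs. \<forall>y\<in>Hs. ph x = ph y \<longrightarrow> (\<exists>!m. m \<in> H \<and> acth m x = y)) \<and>
      \<comment> \<open>Q holds only on compatible stalk indices\<close>
      (\<forall>zs. rel M SQ zs \<longrightarrow> (\<exists>xs y. zs = xs @ [y] \<and> length xs = n \<and> set xs \<subseteq> Gs \<and> y \<in> Hs \<and>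
                compat_idx n I (map (\<kappa> \<circ> pg) xs) (\<kappa> (ph y)))) \<and>
      \<comment> \<open>Q is symmetric in the first n arguments\<close>
      (\<forall>xs xs' y. length xs = n \<and> mset xs' = mset xs \<longrightarrow>
                 (rel M SQ (xs' @ [y]) \<longleftrightarrow> rel M SQ (xs @ [y]))) \<and>
      \<comment> \<open>the equivariance condition\<close>
      (\<forall>xs y \<gamma>s m. length xs = n \<and> length \<gamma>s = n \<and> set xs \<subseteq> Gs \<and> y \<in> Hs \<and>
                   set \<gamma>s \<subseteq> G \<and> m \<in> H \<and>
                   compat_idx n I (map (\<kappa> \<circ> pg) xs) (\<kappa> (ph y)) \<longrightarrow>
         ((rel M SQ (map2 actg \<gamma>s xs @ [acth m y]) \<longleftrightarrow> rel M SQ (xs @ [y]))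
          \<longleftrightarrow> foldr hadd (map (\<lambda>\<gamma>. ev \<gamma> (ph y)) \<gamma>s @ [m]) z = z))))"

text \<open>K = [I]^n is represented
  by the n-subsets themselves, Z_2 by bool (True = 1), G = (+)_{u in K} Z_2 by finite subsets
  of K (supports), G* = K x G, H* = K x Z_2.\<close>
datatype 'i hs_elt =
    EI 'i
  | EK "'i set"
  | EH bool
  | EG "'i set set"
  | EGs "'i set" "'i set set"
  | EHs "'i set" bool

definition std_G :: "nat \<Rightarrow> 'i set \<Rightarrow> 'i set set set" where
  "std_G n I = {\<gamma>. \<gamma> \<subseteq> nsubsets n I \<and> finite \<gamma>}"

definition symdiff :: "'x set \<Rightarrow> 'x set \<Rightarrow> 'x set" where
  "symdiff a b = (a - b) \<union> (b - a)"

fun std_rel :: "nat \<Rightarrow> 'i set \<Rightarrow> hs_sym \<Rightarrow> 'i hs_elt list \<Rightarrow> bool" where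
  "std_rel n I SI xs = (\<exists>i\<in>I. xs = [EI i])"
| "std_rel n I SK xs = (\<exists>u\<in>nsubsets n I. xs = [EK u])"
| "std_rel n I SH xs = (\<exists>b. xs = [EH b])"
| "std_rel n I SG xs = (\<exists>\<gamma>\<in>std_G n I. xs = [EG \<gamma>])"
| "std_rel n I SGs xs = (\<exists>u\<in>nsubsets n I. \<exists>\<gamma>\<in>std_G n I. xs = [EGs u \<gamma>])"
| "std_rel n I SHs xs = (\<exists>u\<in>nsubsets n I. \<exists>b. xs = [EHs u b])"
| "std_rel n I SMem xs = (\<exists>i\<in>I. \<exists>u\<in>nsubsets n I. i \<in> u \<and> xs = [EI i, EK u])"
| "std_rel n I SHAdd xs = (\<exists>a b. xs = [EH a, EH b, EH (a \<noteq> b)])"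
| "std_rel n I SGAdd xs = (\<exists>\<gamma>\<in>std_G n I. \<exists>\<delta>\<in>std_G n I. xs = [EG \<gamma>, EG \<delta>, EG (symdiff \<gamma> \<delta>)])"
| "std_rel n I SEv xs = (\<exists>\<gamma>\<in>std_G n I. \<exists>u\<in>nsubsets n I. xs = [EG \<gamma>, EK u, EH (u \<in> \<gamma>)])"
| "std_rel n I SSupp xs = (\<exists>\<gamma>\<in>std_G n I. \<exists>u\<in>nsubsets n I. u \<in> \<gamma> \<and> xs = [EG \<gamma>, EK u])"
| "std_rel n I SPG xs = (\<exists>u\<in>nsubsets n I. \<exists>\<gamma>\<in>std_G n I. xs = [EGs u \<gamma>, EK u])"
| "std_rel n I SActG xs = (\<exists>\<delta>\<in>std_G n I. \<exists>u\<in>nsubsets n I. \<exists>\<gamma>\<in>std_G n I.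
        xs = [EG \<delta>, EGs u \<gamma>, EGs u (symdiff \<delta> \<gamma>)])"
| "std_rel n I SPH xs = (\<exists>u\<in>nsubsets n I. \<exists>b. xs = [EHs u b, EK u])"
| "std_rel n I SActH xs = (\<exists>a. \<exists>u\<in>nsubsets n I. \<exists>b. xs = [EH a, EHs u b, EHs u (a \<noteq> b)])"
| "std_rel n I SQ xs = (\<exists>us \<gamma>s v m. length us = n \<and> length \<gamma>s = n \<and>
        set us \<subseteq> nsubsets n I \<and> set \<gamma>s \<subseteq> std_G n I \<and> v \<in> nsubsets n I \<and>
        compat_idx n I us v \<and>
        m = odd (length (filter (\<lambda>\<gamma>. v \<in> \<gamma>) \<gamma>s)) \<and>
        xs = map2 EGs us \<gamma>s @ [EHs v m])"

definition std_univ :: "nat \<Rightarrow> 'i set \<Rightarrow> 'i hs_elt set" where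
  "std_univ n I = EI ` I \<union> EK ` nsubsets n I \<union> range EH \<union> EG ` std_G n I
     \<union> (\<lambda>(u, \<gamma>). EGs u \<gamma>) ` (nsubsets n I \<times> std_G n I)
     \<union> (\<lambda>(u, b). EHs u b) ` (nsubsets n I \<times> UNIV)"

definition std :: "nat \<Rightarrow> 'i set \<Rightarrow> ('i hs_elt, hs_sym) rstr" where
  "std n I = \<lparr>univ = std_univ n I, rel = std_rel n I\<rparr>"

end

theory Submission
  imports Defs
begin

text \<open>A model of \<open>K\<^sup>n\<close> is standard as soon as one can choose a point in every stalk of \<open>G\<^sup>*\<close>
  and of \<open>H\<^sup>*\<close> such that \<open>Q\<close> holds on all tuples of chosen points with compatible indices:
  coordinates relative to these base points are then an isomorphism onto the standard model.
  Starting from arbitrary points, the point of the stalk \<open>u\<close> is moved by an element of \<open>G\<close> whose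
  support consists of the \<open>v\<close> for which \<open>u\<close> is responsible for repairing \<open>Q\<close> on the
  \<open>(n + 1)\<close>-set \<open>u \<union> v\<close>. This support must be finite, which is where \<open>|N| \<le> \<aleph>\<^bsub>n-3\<^esub>\<close>
  enters: by Kuratowski's free set theorem there is \<open>F\<close> with finite values such that every
  \<open>(n - 1)\<close>-subset \<open>w\<close> of \<open>N\<close> has an element \<open>x \<in> F (w - {x})\<close>, and choosing the responsible
  stalk \<open>W - {x}\<close> with such an \<open>x\<close> confines the support of the correction at \<open>u\<close> to \<open>n\<close>-sets inside
  the finite set \<open>u \<union> \<Union>(F ` Pow u)\<close>. Responsible stalks are taken inside \<open>I(M)\<close> whenever \<open>W\<close> is, and
  by \<open>L\<^bsub>\<omega>\<^sub>1,\<omega>\<^esub>\<close>-elementarity the support in \<open>N\<close> of an element of \<open>G(M)\<close> lies in \<open>K(M)\<close>; hence the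
  base of \<open>N\<close> restricts to a base of \<open>M\<close>, and the two isomorphisms agree on \<open>M\<close>.\<close>

section \<open>Kuratowski's free set theorem\<close>

definition kuratowski_map :: "nat \<Rightarrow> 'a set \<Rightarrow> ('a set \<Rightarrow> 'a set) \<Rightarrow> bool" where
  "kuratowski_map k A F \<longleftrightarrow> (\<forall>s. finite (F s)) \<and>
     (\<forall>w. w \<subseteq> A \<longrightarrow> finite w \<longrightarrow> card w = k \<longrightarrow> (\<exists>x\<in>w. x \<in> F (w - {x})))"

context includes cardinal_syntax
begin

lemma le_aleph_card_of_mono:
  fixes B S :: "'a set"
  shows "le_aleph k B \<Longrightarrow> |S| \<le>o |B| \<Longrightarrow> le_aleph k S"
  by (cases k) (auto intro: ordLeq_transitive)

lemma finite_Linear_order_greatest: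
  assumes "finite s" "s \<noteq> {}" "s \<subseteq> Field r" "Linear_order r"
  shows "\<exists>a\<in>s. \<forall>b\<in>s. (b, a) \<in> r"
  using assms
proof (induction s rule: finite_ne_induct)
  case (singleton x)
  then show ?case
    using assms(4) by (auto simp: linear_order_on_def partial_order_on_def preorder_on_def refl_on_def)
next
  case (insert x F)
  then obtain a where a: "a \<in> F" "\<forall>b\<in>F. (b, a) \<in> r" by auto
  have tot: "(x, a) \<in> r \<or> (a, x) \<in> r" and refl: "(x, x) \<in> r" and tr: "trans r"
    using assms(4) insert a
    by (auto simp: linear_order_on_def partial_order_on_def preorder_on_def refl_on_def total_on_def)
  show ?case
  proof (cases "(x, a) \<in> r")
    case True
    then show ?thesis using a by auto
  next
    case False
    then show ?thesis using a tot refl tr by (auto dest: transD)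
  qed
qed

lemma kuratowski_map_countable:
  assumes "|A| \<le>o natLeq"
  shows "\<exists>F. kuratowski_map 2 A F"
proof -
  have "|A| \<le>o |UNIV :: nat set|"
    using ordLeq_ordIso_trans[OF assms ordIso_symmetric[OF card_of_nat]] .
  then obtain g :: "'a \<Rightarrow> nat" where g: "inj_on g A"
    using card_of_ordLeq[of A "UNIV :: nat set"] by auto
  define F where "F s = (if finite s then {b\<in>A. \<exists>a\<in>s. g b < g a} else {})" for s
  have below_finite: "finite {b\<in>A. g b < g a}" for a
  proof (rule finite_subset)
    show "{b\<in>A. g b < g a} \<subseteq> inv_into A g ` {..<g a}"
    proof
      fix b assume "b \<in> {b\<in>A. g b < g a}"
      then show "b \<in> inv_into A g ` {..<g a}"
        using inv_into_f_f[OF g] by (intro image_eqI[of _ _ "g b"]) auto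
    qed
  qed simp
  have "finite (F s)" for s
  proof (cases "finite s")
    case True
    then have "F s = (\<Union>a\<in>s. {b\<in>A. g b < g a})" by (auto simp: F_def)
    then show ?thesis using True below_finite by simp
  qed (simp add: F_def)
  moreover have "\<exists>x\<in>w. x \<in> F (w - {x})" if w: "w \<subseteq> A" "card w = 2" for w
  proof -
    obtain a b where ab: "w = {a, b}" "a \<noteq> b" using w(2) card_2_iff by metis
    then have "g a \<noteq> g b" using g w(1) inj_onD by fastforce
    then consider "g a < g b" | "g b < g a" by linarith
    then show ?thesis
    proof cases
      case 1
      then have "a \<in> F (w - {a})" using ab w(1) by (auto simp: F_def)
      then show ?thesis using ab by blast
    next
      case 2
      then have "b \<in> F (w - {b})" using ab w(1) by (auto simp: F_def)
      then show ?thesis using ab by blast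
    qed
  qed
  ultimately show ?thesis unfolding kuratowski_map_def by blast
qed

lemma kuratowski_map_Suc:
  assumes lo: "Linear_order r" and fr: "Field r = A"
    and Fam: "\<And>a. a \<in> A \<Longrightarrow> kuratowski_map k (underS r a) (Fam a)"
  shows "\<exists>F. kuratowski_map (Suc k) A F"
proof -
  have antis: "antisym r" using lo unfolding linear_order_on_def partial_order_on_def by blast
  define mx where "mx s = (THE a. a \<in> s \<and> (\<forall>b\<in>s. (b, a) \<in> r))" for s
  have mx_eq: "mx s = a" if "a \<in> s" "\<forall>b\<in>s. (b, a) \<in> r" for s a
    unfolding mx_def by (rule the_equality) (use that antis in \<open>auto dest: antisymD\<close>)
  have mx: "mx s \<in> s \<and> (\<forall>b\<in>s. (b, mx s) \<in> r)" if s: "finite s" "s \<noteq> {}" "s \<subseteq> A" for s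
  proof -
    obtain a where "a \<in> s" "\<forall>b\<in>s. (b, a) \<in> r"
      using finite_Linear_order_greatest[OF s(1,2) _ lo] s(3) fr by auto
    then show ?thesis using mx_eq by simp
  qed
  \<comment> \<open>a set is handled by the map belonging to its greatest element\<close>
  define F where "F s = (if finite s \<and> s \<noteq> {} \<and> s \<subseteq> A then Fam (mx s) (s - {mx s}) else {})" for s
  have "finite (F s)" for s
    using Fam mx by (auto simp: F_def kuratowski_map_def)
  moreover have "\<exists>x\<in>w. x \<in> F (w - {x})" if w: "w \<subseteq> A" "finite w" "card w = Suc k" for w
  proof -
    define a where "a = mx w"
    have "w \<noteq> {}" using w(3) by auto
    then have a: "a \<in> w" "\<forall>b\<in>w. (b, a) \<in> r" using mx w(1,2) a_def by auto
    then have sub: "w - {a} \<subseteq> underS r a" by (auto simp: underS_def)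
    have card: "card (w - {a}) = k" using w a by simp
    have "kuratowski_map k (underS r a) (Fam a)" using Fam a w by blast
    then obtain x where x: "x \<in> w - {a}" "x \<in> Fam a (w - {a} - {x})"
      using sub card w(2) unfolding kuratowski_map_def by blast
    have "mx (w - {x}) = a" using a x by (intro mx_eq) auto
    moreover have "finite (w - {x}) \<and> w - {x} \<noteq> {} \<and> w - {x} \<subseteq> A" using w x a by auto
    ultimately have "F (w - {x}) = Fam a (w - {x} - {a})" unfolding F_def by presburger
    also have "w - {x} - {a} = w - {a} - {x}" by auto
    finally show ?thesis using x by auto
  qed
  ultimately show ?thesis unfolding kuratowski_map_def by blast
qed

lemma kuratowski_map_cardSuc:
  fixes A :: "'a set" and B :: "'b set"
  assumes A: "|A| \<le>o cardSuc |B|"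
    and IH: "\<And>C :: 'a set. |C| \<le>o |B| \<Longrightarrow> \<exists>F. kuratowski_map k C F"
  shows "\<exists>F. kuratowski_map (Suc k) A F"
proof -
  define r where "r = |A|"
  have "\<exists>F. kuratowski_map k (underS r a) F" if "a \<in> A" for a
  proof -
    have "Card_order r" unfolding r_def by (rule card_of_Card_order)
    then have "|underS r a| <o r" by (rule card_of_underS) (simp add: r_def that Field_card_of)
    then have "|underS r a| <o cardSuc |B|" using ordLess_ordLeq_trans A by (auto simp: r_def)
    then show ?thesis
      using IH cardSuc_ordLeq_ordLess[OF card_of_Card_order card_of_Card_order] by blast
  qed
  then obtain Fam where "\<And>a. a \<in> A \<Longrightarrow> kuratowski_map k (underS r a) (Fam a)" by metis
  moreover have "Linear_order r" using card_of_Well_order[of A] by (simp add: r_def well_order_on_def)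
  ultimately show ?thesis using kuratowski_map_Suc Field_card_of r_def by metis
qed

lemma kuratowski_map_le_aleph: "le_aleph k A \<Longrightarrow> \<exists>F. kuratowski_map (k + 2) A F"
proof (induction k arbitrary: A)
  case 0
  then show ?case using kuratowski_map_countable by (simp add: eval_nat_numeral)
next
  case (Suc k)
  then obtain B :: "'a set" where B: "le_aleph k B" "|A| \<le>o cardSuc |B|" by auto
  have "\<exists>F. kuratowski_map (k + 2) C F" if "|C| \<le>o |B|" for C :: "'a set"
    using Suc.IH le_aleph_card_of_mono[OF B(1) that] by blast
  then show ?case using kuratowski_map_cardSuc[OF B(2)] by simp
qed

end

section \<open>Elementary substructures\<close>

lemma elem_sub_rel_iff:
  assumes "elem_sub M N" "set xs \<subseteq> univ M" "univ M \<noteq> {}"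
  shows "rel M r xs \<longleftrightarrow> rel N r xs"
proof -
  obtain c where c: "c \<in> univ M" using assms(3) by blast
  define s where "s k = (if k < length xs then xs ! k else c)" for k
  have "\<forall>k. s k \<in> univ M" using assms(2) c by (auto simp: s_def)
  then have "sat M (FRel r [0..<length xs]) s \<longleftrightarrow> sat N (FRel r [0..<length xs]) s"
    using assms(1) unfolding elem_sub_def by (metis wf_fm.simps(2))
  moreover have "map s [0..<length xs] = xs" by (rule nth_equalityI) (auto simp: s_def)
  ultimately show ?thesis by simp
qed

lemma elem_sub_witness_avoiding:
  assumes es: "elem_sub M N" and a: "a \<in> univ M" and S: "finite S" "S \<subseteq> univ M"
    and b: "b \<in> univ N" "b \<notin> S" "rel N R [a, b]"
  obtains b' where "b' \<in> univ M" "b' \<notin> S" "rel M R [a, b']"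
proof -
  obtain cs where cs: "set cs = S" using S(1) finite_list by blast
  \<comment> \<open>the formula \<open>\<exists>x. R(a, x) \<and> (\<And>j. x \<noteq> c\<^sub>j)\<close>, with \<open>x, a, c\<^sub>j\<close> the variables \<open>0, 1, j + 2\<close>\<close>
  define F :: "nat \<Rightarrow> _ fm" where
    "F k = (if k = 0 then FRel R [1, 0] else if k \<le> length cs then FNeg (FEq 0 (k + 1)) else FEq 0 0)"
    for k
  define s where "s k = (if 2 \<le> k \<and> k - 2 < length cs then cs ! (k - 2) else a)" for k
  have s_cs: "s (Suc j + 1) = cs ! j" if "j < length cs" for j
    using that by (simp add: s_def)
  have "s k \<in> univ M" for k
    using a S(2) cs nth_mem[of "k - 2" cs] by (auto simp: s_def)
  moreover have "wf_fm (FEx 0 (FConj F))"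
  proof -
    have "(\<Union>k. fv (F k)) \<subseteq> {..Suc (length cs)}" by (auto simp: F_def split: if_splits)
    then show ?thesis using finite_subset by (auto simp: F_def)
  qed
  moreover have "sat N (FEx 0 (FConj F)) s"
  proof -
    have "sat N (F k) (s(0 := b))" for k
    proof (cases "k = 0 \<or> length cs < k")
      case True
      then show ?thesis using b(3) by (auto simp: F_def s_def)
    next
      case False
      then obtain j where "k = Suc j" "j < length cs" by (metis Suc_le_eq not0_implies_Suc not_le)
      then show ?thesis using b(2) cs s_cs[of j] by (auto simp: F_def)
    qed
    then show ?thesis using b(1) by auto
  qed
  ultimately have "sat M (FEx 0 (FConj F)) s" using es unfolding elem_sub_def by blast
  then obtain b' where b': "b' \<in> univ M" "\<And>k. sat M (F k) (s(0 := b'))" by auto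
  have "b' \<noteq> cs ! j" if "j < length cs" for j
    using b'(2)[of "Suc j"] that s_cs[OF that] by (simp add: F_def)
  then have "b' \<notin> S" using cs by (metis in_set_conv_nth)
  moreover have "rel M R [a, b']" using b'(2)[of 0] by (simp add: F_def s_def)
  ultimately show ?thesis by (rule that[OF b'(1)])
qed

lemma nsubsets_Suc_iff:
  assumes "finite W" "card W = Suc n"
  shows "s \<in> nsubsets n W \<longleftrightarrow> (\<exists>x\<in>W. s = W - {x})"
proof
  assume "s \<in> nsubsets n W"
  then have sW: "s \<subseteq> W" and "card s = n" "finite s" by (auto simp: nsubsets_def)
  then have "card (W - s) = 1" using card_Diff_subset[of s W] assms(2) by simp
  then obtain x where "W - s = {x}" using card_1_singletonE by blast
  with sW show "\<exists>x\<in>W. s = W - {x}" by blast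
next
  assume "\<exists>x\<in>W. s = W - {x}"
  then show "s \<in> nsubsets n W" using assms by (auto simp: nsubsets_def)
qed

lemma card_nsubsets_Suc:
  assumes "finite W" "card W = Suc n"
  shows "card (nsubsets n W) = Suc n"
proof -
  have "nsubsets n W = (\<lambda>x. W - {x}) ` W" using nsubsets_Suc_iff[OF assms] by blast
  moreover have "inj_on (\<lambda>x. W - {x}) W" by (rule inj_onI) blast
  ultimately show ?thesis using assms card_image by metis
qed

lemma nsubsets_Suc_Un:
  assumes "finite W" "card W = Suc n" "s \<in> nsubsets n W" "t \<in> nsubsets n W" "s \<noteq> t"
  shows "s \<union> t = W"
  using assms nsubsets_Suc_iff[OF assms(1,2)] by blast

text \<open>The point is found by applying \<open>F\<close> to \<open>W\<close> without two of its points: the one outside \<open>s\<close>, and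
  one outside \<open>J\<close> if possible.\<close>

lemma kuratowski_map_choose_point:
  assumes n: "0 < n" and F: "kuratowski_map (n - 1) A F"
    and W: "W \<subseteq> A" "finite W" "card W = Suc n" and s: "s \<subseteq> W" "card s = n"
  shows "\<exists>x\<in>W. W - {x} \<noteq> s \<and> x \<in> \<Union>(F ` Pow (W - {x})) \<and> (\<not> W \<subseteq> J \<longrightarrow> \<not> W - {x} \<subseteq> J)"
proof -
  have "card (W - s) = 1" using card_Diff_subset[OF finite_subset[OF s(1) W(2)] s(1)] W(3) s(2) by simp
  then obtain b where b: "W - s = {b}" using card_1_singletonE by blast
  then have sb: "s = W - {b}" and bW: "b \<in> W" using s(1) by blast+
  obtain a where a: "a \<in> W" "a \<noteq> b" "\<not> W \<subseteq> J \<longrightarrow> a \<notin> J \<or> b \<notin> J"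
  proof (cases "\<exists>c\<in>W. c \<notin> J \<and> c \<noteq> b")
    case False
    have "W - {b} \<noteq> {}" using W(2,3) n bW by (metis card_Diff_singleton card_eq_0_iff diff_Suc_1 not_gr0)
    then obtain a where "a \<in> W" "a \<noteq> b" by blast
    then show ?thesis using that False by blast
  qed blast
  define W0 where "W0 = W - {a, b}"
  have "card W0 = n - 1" using a(1,2) bW W(2,3) by (simp add: W0_def card_Diff_subset)
  moreover have "W0 \<subseteq> A" "finite W0" using W(1,2) by (auto simp: W0_def)
  ultimately obtain x where x: "x \<in> W0" "x \<in> F (W0 - {x})"
    using F unfolding kuratowski_map_def by blast
  have "W0 - {x} \<in> Pow (W - {x})" by (auto simp: W0_def)
  then show ?thesis using x a bW sb by (auto simp: W0_def)
qed

lemma graph1_rel: "graph1 M S A B f \<Longrightarrow> rel M S [a, b] \<longleftrightarrow> a \<in> A \<and> b = f a"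
  unfolding graph1_def by blast

lemma graph1_closed: "graph1 M S A B f \<Longrightarrow> a \<in> A \<Longrightarrow> f a \<in> B"
  unfolding graph1_def by blast

lemma graph2_rel: "graph2 M S A B C f \<Longrightarrow> rel M S [a, b, c] \<longleftrightarrow> a \<in> A \<and> b \<in> B \<and> c = f a b"
  unfolding graph2_def by blast

lemma graph2_closed: "graph2 M S A B C f \<Longrightarrow> a \<in> A \<Longrightarrow> b \<in> B \<Longrightarrow> f a b \<in> C"
  unfolding graph2_def by blast

locale Kn_model =
  fixes n :: nat and M :: "('a, hs_sym) rstr"
    and I K H G Gs Hs :: "'a set" and \<kappa> :: "'a \<Rightarrow> 'a set"
    and z e :: 'a and hadd gadd ev actg acth :: "'a \<Rightarrow> 'a \<Rightarrow> 'a" and pg ph :: "'a \<Rightarrow> 'a"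
  assumes I_def: "I = sortset M SI" and K_def: "K = sortset M SK" and H_def: "H = sortset M SH"
    and G_def: "G = sortset M SG" and Gs_def: "Gs = sortset M SGs" and Hs_def: "Hs = sortset M SHs"
    and \<kappa>_def: "\<kappa> = (\<lambda>u. {i\<in>I. rel M SMem [i, u]})"
    and arity: "\<forall>S xs. rel M S xs \<longrightarrow> length xs = hs_arity n S \<and> set xs \<subseteq> univ M"
    and cover: "\<forall>x\<in>univ M. \<exists>S\<in>{SI, SK, SH, SG, SGs, SHs}. rel M S [x]"
    and disj: "\<forall>x\<in>univ M. \<forall>S\<in>{SI, SK, SH, SG, SGs, SHs}. \<forall>T\<in>{SI, SK, SH, SG, SGs, SHs}. rel M S [x] \<and> rel M T [x] \<longrightarrow> S = T"
    and memrel: "\<forall>i u. rel M SMem [i, u] \<longrightarrow> i \<in> I \<and> u \<in> K"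
    and kbij: "bij_betw \<kappa> K (nsubsets n I)"
    and Hze: "H = {z, e}" and zne: "z \<noteq> e" and haddg: "graph2 M SHAdd H H H hadd"
    and hadd_eq: "\<forall>a\<in>H. \<forall>b\<in>H. hadd a b = (if a = b then z else e)"
    and gaddg: "graph2 M SGAdd G G G gadd" and evg: "graph2 M SEv G K H ev"
    and ev_add: "\<forall>\<gamma>\<in>G. \<forall>\<delta>\<in>G. \<forall>u\<in>K. ev (gadd \<gamma> \<delta>) u = hadd (ev \<gamma> u) (ev \<delta> u)"
    and gbij: "bij_betw (\<lambda>\<gamma>. restrict (ev \<gamma>) K) G {\<phi>\<in>K \<rightarrow>\<^sub>E H. finite {u\<in>K. \<phi> u \<noteq> z}}"
    and supp: "\<forall>\<gamma> u. rel M SSupp [\<gamma>, u] \<longleftrightarrow> \<gamma> \<in> G \<and> u \<in> K \<and> ev \<gamma> u = e"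
    and pgg: "graph1 M SPG Gs K pg" and actgg: "graph2 M SActG G Gs Gs actg"
    and pg_act: "\<forall>\<gamma>\<in>G. \<forall>x\<in>Gs. pg (actg \<gamma> x) = pg x"
    and act_add: "\<forall>\<gamma>\<in>G. \<forall>\<delta>\<in>G. \<forall>x\<in>Gs. actg (gadd \<gamma> \<delta>) x = actg \<gamma> (actg \<delta> x)"
    and stalkG: "\<forall>u\<in>K. \<exists>x\<in>Gs. pg x = u"
    and regG: "\<forall>x\<in>Gs. \<forall>y\<in>Gs. pg x = pg y \<longrightarrow> (\<exists>!\<gamma>. \<gamma> \<in> G \<and> actg \<gamma> x = y)"
    and phg: "graph1 M SPH Hs K ph" and acthg: "graph2 M SActH H Hs Hs acth"
    and ph_act: "\<forall>m\<in>H. \<forall>y\<in>Hs. ph (acth m y) = ph y"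
    and acth_add: "\<forall>m\<in>H. \<forall>m'\<in>H. \<forall>y\<in>Hs. acth (hadd m m') y = acth m (acth m' y)"
    and stalkH: "\<forall>u\<in>K. \<exists>y\<in>Hs. ph y = u"
    and regH: "\<forall>x\<in>Hs. \<forall>y\<in>Hs. ph x = ph y \<longrightarrow> (\<exists>!m. m \<in> H \<and> acth m x = y)"
    and Qcomp: "\<forall>zs. rel M SQ zs \<longrightarrow> (\<exists>xs y. zs = xs @ [y] \<and> length xs = n \<and> set xs \<subseteq> Gs \<and> y \<in> Hs \<and>
                compat_idx n I (map (\<kappa> \<circ> pg) xs) (\<kappa> (ph y)))"
    and Qsym: "\<forall>xs xs' y. length xs = n \<and> mset xs' = mset xs \<longrightarrow>
                 (rel M SQ (xs' @ [y]) \<longleftrightarrow> rel M SQ (xs @ [y]))"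
    and Qequi: "\<forall>xs y \<gamma>s m. length xs = n \<and> length \<gamma>s = n \<and> set xs \<subseteq> Gs \<and> y \<in> Hs \<and>
                   set \<gamma>s \<subseteq> G \<and> m \<in> H \<and>
                   compat_idx n I (map (\<kappa> \<circ> pg) xs) (\<kappa> (ph y)) \<longrightarrow>
         ((rel M SQ (map2 actg \<gamma>s xs @ [acth m y]) \<longleftrightarrow> rel M SQ (xs @ [y]))
          \<longleftrightarrow> foldr hadd (map (\<lambda>\<gamma>. ev \<gamma> (ph y)) \<gamma>s @ [m]) z = z)"

lemma in_Kn_imp_Kn_model:
  assumes "in_Kn n M"
  shows "\<exists>z e hadd gadd ev actg acth pg ph. Kn_model n M (sortset M SI) (sortset M SK) (sortset M SH)
     (sortset M SG) (sortset M SGs) (sortset M SHs) (\<lambda>u. {i\<in>sortset M SI. rel M SMem [i, u]})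
     z e hadd gadd ev actg acth pg ph"
  using assms unfolding in_Kn_def Let_def Kn_model_def
  by (elim conjE exE) (intro exI conjI refl; assumption)

context Kn_model
begin

lemma rel_in_univ: "rel M S xs \<Longrightarrow> set xs \<subseteq> univ M" using arity by blast
lemma rel_length: "rel M S xs \<Longrightarrow> length xs = hs_arity n S" using arity by blast

lemma rel_sort_iff:
  "rel M SI [a] \<longleftrightarrow> a \<in> I" "rel M SK [a] \<longleftrightarrow> a \<in> K" "rel M SH [a] \<longleftrightarrow> a \<in> H"
  "rel M SG [a] \<longleftrightarrow> a \<in> G" "rel M SGs [a] \<longleftrightarrow> a \<in> Gs" "rel M SHs [a] \<longleftrightarrow> a \<in> Hs"
  by (simp_all add: I_def K_def H_def G_def Gs_def Hs_def sortset_def)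

lemma I_univ: "x \<in> I \<Longrightarrow> x \<in> univ M" using rel_in_univ[of SI "[x]"] by (simp add: rel_sort_iff)
lemma K_univ: "x \<in> K \<Longrightarrow> x \<in> univ M" using rel_in_univ[of SK "[x]"] by (simp add: rel_sort_iff)
lemma H_univ: "x \<in> H \<Longrightarrow> x \<in> univ M" using rel_in_univ[of SH "[x]"] by (simp add: rel_sort_iff)
lemma G_univ: "x \<in> G \<Longrightarrow> x \<in> univ M" using rel_in_univ[of SG "[x]"] by (simp add: rel_sort_iff)
lemma Gs_univ: "x \<in> Gs \<Longrightarrow> x \<in> univ M" using rel_in_univ[of SGs "[x]"] by (simp add: rel_sort_iff)
lemma Hs_univ: "x \<in> Hs \<Longrightarrow> x \<in> univ M" using rel_in_univ[of SHs "[x]"] by (simp add: rel_sort_iff)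

lemma univ_cases: "x \<in> univ M \<Longrightarrow> x \<in> I \<or> x \<in> K \<or> x \<in> H \<or> x \<in> G \<or> x \<in> Gs \<or> x \<in> Hs"
  using cover by (auto simp: rel_sort_iff[symmetric])

lemma sort_unique:
  assumes "rel M S [x]" "rel M T [x]" "S \<in> {SI, SK, SH, SG, SGs, SHs}" "T \<in> {SI, SK, SH, SG, SGs, SHs}"
  shows "S = T"
proof -
  have "x \<in> univ M" using rel_in_univ[OF assms(1)] by simp
  then show ?thesis using disj assms by blast
qed

lemma sorts_disjoint:
  "x \<in> I \<Longrightarrow> x \<notin> K \<and> x \<notin> H \<and> x \<notin> G \<and> x \<notin> Gs \<and> x \<notin> Hs"
  "x \<in> K \<Longrightarrow> x \<notin> I \<and> x \<notin> H \<and> x \<notin> G \<and> x \<notin> Gs \<and> x \<notin> Hs"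
  "x \<in> H \<Longrightarrow> x \<notin> I \<and> x \<notin> K \<and> x \<notin> G \<and> x \<notin> Gs \<and> x \<notin> Hs"
  "x \<in> G \<Longrightarrow> x \<notin> I \<and> x \<notin> K \<and> x \<notin> H \<and> x \<notin> Gs \<and> x \<notin> Hs"
  "x \<in> Gs \<Longrightarrow> x \<notin> I \<and> x \<notin> K \<and> x \<notin> H \<and> x \<notin> G \<and> x \<notin> Hs"
  "x \<in> Hs \<Longrightarrow> x \<notin> I \<and> x \<notin> K \<and> x \<notin> H \<and> x \<notin> G \<and> x \<notin> Gs"
  unfolding rel_sort_iff[symmetric] by (metis sort_unique hs_sym.distinct insertCI)+

lemma ev_H: "\<gamma> \<in> G \<Longrightarrow> u \<in> K \<Longrightarrow> ev \<gamma> u \<in> H" using graph2_closed[OF evg] .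
lemma gadd_G: "\<gamma> \<in> G \<Longrightarrow> \<delta> \<in> G \<Longrightarrow> gadd \<gamma> \<delta> \<in> G" using graph2_closed[OF gaddg] .
lemma hadd_H: "a \<in> H \<Longrightarrow> b \<in> H \<Longrightarrow> hadd a b \<in> H" using graph2_closed[OF haddg] .
lemma actg_Gs: "\<gamma> \<in> G \<Longrightarrow> x \<in> Gs \<Longrightarrow> actg \<gamma> x \<in> Gs" using graph2_closed[OF actgg] .
lemma acth_Hs: "m \<in> H \<Longrightarrow> y \<in> Hs \<Longrightarrow> acth m y \<in> Hs" using graph2_closed[OF acthg] .
lemma pg_K: "x \<in> Gs \<Longrightarrow> pg x \<in> K" using graph1_closed[OF pgg] .
lemma ph_K: "x \<in> Hs \<Longrightarrow> ph x \<in> K" using graph1_closed[OF phg] .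
lemma z_H: "z \<in> H" and e_H: "e \<in> H" using Hze by auto
lemma ev_cases: "\<gamma> \<in> G \<Longrightarrow> u \<in> K \<Longrightarrow> ev \<gamma> u = z \<or> ev \<gamma> u = e" using ev_H Hze by auto
lemma H_eqI: "a \<in> H \<Longrightarrow> b \<in> H \<Longrightarrow> (a = e) = (b = e) \<Longrightarrow> a = b" using Hze by auto

lemma kappa_inj: "u \<in> K \<Longrightarrow> v \<in> K \<Longrightarrow> \<kappa> u = \<kappa> v \<Longrightarrow> u = v"
  using kbij unfolding bij_betw_def by (auto dest: inj_onD)

lemma kappa_nsubsets: "u \<in> K \<Longrightarrow> \<kappa> u \<in> nsubsets n I"
  using kbij unfolding bij_betw_def by auto

lemma kappa_surj: "s \<in> nsubsets n I \<Longrightarrow> \<exists>u\<in>K. \<kappa> u = s"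
  using kbij unfolding bij_betw_def by (metis imageE)

lemma mem_kappa: "i \<in> \<kappa> u \<longleftrightarrow> i \<in> I \<and> rel M SMem [i, u]"
  by (simp add: \<kappa>_def)

lemma G_eqI: "\<gamma> \<in> G \<Longrightarrow> \<delta> \<in> G \<Longrightarrow> (\<And>u. u \<in> K \<Longrightarrow> ev \<gamma> u = ev \<delta> u) \<Longrightarrow> \<gamma> = \<delta>"
  using gbij unfolding bij_betw_def inj_on_def by (metis restrict_ext)

lemma finite_support: "\<gamma> \<in> G \<Longrightarrow> finite {u\<in>K. ev \<gamma> u = e}"
proof -
  assume "\<gamma> \<in> G"
  then have "finite {u\<in>K. restrict (ev \<gamma>) K u \<noteq> z}" using gbij unfolding bij_betw_def by blast
  moreover have "{u\<in>K. restrict (ev \<gamma>) K u \<noteq> z} = {u\<in>K. ev \<gamma> u \<noteq> z}" by auto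
  ultimately have "finite {u\<in>K. ev \<gamma> u \<noteq> z}" by simp
  then show ?thesis by (rule rev_finite_subset) (use zne in auto)
qed

lemma G_with_support:
  assumes "finite T" "T \<subseteq> K"
  obtains \<gamma> where "\<gamma> \<in> G" "\<And>u. u \<in> K \<Longrightarrow> ev \<gamma> u = (if u \<in> T then e else z)"
proof -
  define \<phi> where "\<phi> = restrict (\<lambda>u. if u \<in> T then e else z) K"
  have "{u\<in>K. \<phi> u \<noteq> z} \<subseteq> T" using zne by (auto simp: \<phi>_def)
  then have "\<phi> \<in> {\<phi>\<in>K \<rightarrow>\<^sub>E H. finite {u\<in>K. \<phi> u \<noteq> z}}"
    using assms(1) finite_subset Hze by (auto simp: \<phi>_def)
  then have "\<phi> \<in> (\<lambda>\<gamma>. restrict (ev \<gamma>) K) ` G" using gbij unfolding bij_betw_def by blast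
  then obtain \<gamma> where \<gamma>: "\<gamma> \<in> G" "restrict (ev \<gamma>) K = \<phi>" by blast
  have "ev \<gamma> u = (if u \<in> T then e else z)" if "u \<in> K" for u
    using fun_cong[OF \<gamma>(2), of u] that by (simp add: \<phi>_def)
  then show ?thesis by (rule that[OF \<gamma>(1)])
qed

lemma hadd_self: "a \<in> H \<Longrightarrow> hadd a a = z" using hadd_eq by auto
lemma hadd_eq_e_iff: "a \<in> H \<Longrightarrow> b \<in> H \<Longrightarrow> hadd a b = e \<longleftrightarrow> (a = e) \<noteq> (b = e)"
  using hadd_eq Hze zne by auto

lemma foldr_hadd_eq_z_iff:
  "set L \<subseteq> H \<Longrightarrow> foldr hadd L z = z \<longleftrightarrow> even (length (filter (\<lambda>a. a = e) L))"
proof (induction L)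
  case (Cons a L)
  have "foldr hadd L z \<in> H" using Cons.prems by (induction L) (auto simp: z_H hadd_H)
  then show ?case using Cons hadd_eq Hze zne by auto
qed simp

lemma Q_actg_acth_iff:
  assumes "length xs = n" "length \<gamma>s = n" "set xs \<subseteq> Gs" "y \<in> Hs" "set \<gamma>s \<subseteq> G" "m \<in> H"
    and "compat_idx n I (map (\<kappa> \<circ> pg) xs) (\<kappa> (ph y))"
  shows "rel M SQ (map2 actg \<gamma>s xs @ [acth m y]) \<longleftrightarrow>
    (rel M SQ (xs @ [y]) \<longleftrightarrow> even (length (filter (\<lambda>\<gamma>. ev \<gamma> (ph y) = e) \<gamma>s) + (if m = e then 1 else 0)))"
proof -
  have "set (map (\<lambda>\<gamma>. ev \<gamma> (ph y)) \<gamma>s @ [m]) \<subseteq> H" using assms(4-6) ev_H ph_K by auto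
  then have "foldr hadd (map (\<lambda>\<gamma>. ev \<gamma> (ph y)) \<gamma>s @ [m]) z = z \<longleftrightarrow>
      even (length (filter (\<lambda>\<gamma>. ev \<gamma> (ph y) = e) \<gamma>s) + (if m = e then 1 else 0))"
    by (subst foldr_hadd_eq_z_iff) (simp_all add: filter_map o_def)
  moreover have "(rel M SQ (map2 actg \<gamma>s xs @ [acth m y]) \<longleftrightarrow> rel M SQ (xs @ [y])) \<longleftrightarrow>
      foldr hadd (map (\<lambda>\<gamma>. ev \<gamma> (ph y)) \<gamma>s @ [m]) z = z"
    using Qequi assms by blast
  ultimately show ?thesis by blast
qed

lemma compat_idx_stalks:
  assumes us: "length us = n" "set us \<subseteq> K" and v: "v \<in> K"
    and c: "compat_idx n I (map \<kappa> us) (\<kappa> v)"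
  obtains W where "W \<subseteq> I" "finite W" "card W = Suc n" "\<kappa> v \<in> nsubsets n W"
    "distinct us" "set us = {u\<in>K. \<kappa> u \<subseteq> W \<and> u \<noteq> v}"
proof -
  obtain W where W: "W \<subseteq> I" "finite W" "card W = Suc n" "set (map \<kappa> us) \<union> {\<kappa> v} = nsubsets n W"
    using c unfolding compat_idx_def by auto
  have ns: "card (nsubsets n W) = Suc n" by (rule card_nsubsets_Suc[OF W(2,3)])
  have len: "card (set (map \<kappa> us)) \<le> n" using card_length[of "map \<kappa> us"] us(1) by simp
  have new: "\<kappa> v \<notin> set (map \<kappa> us)"
  proof
    assume "\<kappa> v \<in> set (map \<kappa> us)"
    then have "set (map \<kappa> us) = nsubsets n W" using W(4) by blast
    then show False using len ns by simp
  qed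
  then have "card (nsubsets n W) = Suc (card (set (map \<kappa> us)))"
    using W(4)[symmetric] by (simp add: card_insert_if)
  then have "distinct (map \<kappa> us)" using ns us(1) by (simp add: card_distinct)
  then have "distinct us" by (simp add: distinct_map)
  moreover have "set us = {u\<in>K. \<kappa> u \<subseteq> W \<and> u \<noteq> v}"
  proof (intro set_eqI iffI)
    fix u assume "u \<in> set us"
    then show "u \<in> {u\<in>K. \<kappa> u \<subseteq> W \<and> u \<noteq> v}" using W(4) new us(2) by (auto simp: nsubsets_def)
  next
    fix u assume u: "u \<in> {u\<in>K. \<kappa> u \<subseteq> W \<and> u \<noteq> v}"
    then have "\<kappa> u \<in> nsubsets n W" "\<kappa> u \<noteq> \<kappa> v"
      using kappa_nsubsets v kappa_inj by (auto simp: nsubsets_def)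
    then have "\<kappa> u \<in> \<kappa> ` set us" using W(4) by auto
    then show "u \<in> set us" using u us(2) kappa_inj by blast
  qed
  moreover have "\<kappa> v \<in> nsubsets n W" using W(4) by blast
  ultimately show ?thesis using that W(1-3) by blast
qed

lemma finite_stalks_within: "finite B \<Longrightarrow> finite {u\<in>K. \<kappa> u \<subseteq> B}"
proof -
  assume "finite B"
  then have "finite (Pow B)" by simp
  then have "finite (\<kappa> ` {u\<in>K. \<kappa> u \<subseteq> B})" by (rule rev_finite_subset) auto
  moreover have "inj_on \<kappa> {u\<in>K. \<kappa> u \<subseteq> B}" using kappa_inj by (auto intro: inj_onI)
  ultimately show ?thesis by (rule finite_imageD)
qed

lemma some_point_in_stalk:
  assumes "u \<in> K"
  shows "(SOME x. x \<in> Gs \<and> pg x = u) \<in> Gs \<and> pg (SOME x. x \<in> Gs \<and> pg x = u) = u"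
    and "(SOME y. y \<in> Hs \<and> ph y = u) \<in> Hs \<and> ph (SOME y. y \<in> Hs \<and> ph y = u) = u"
  using someI_ex[of "\<lambda>x. x \<in> Gs \<and> pg x = u"] someI_ex[of "\<lambda>y. y \<in> Hs \<and> ph y = u"]
    stalkG stalkH assms by blast+

lemma acth_z: "y \<in> Hs \<Longrightarrow> acth z y = y"
proof -
  assume y: "y \<in> Hs"
  obtain m where m: "m \<in> H" "acth m y = y" using regH y by blast
  have "acth z y = acth (hadd m m) y" using hadd_self m by simp
  also have "\<dots> = y" using acth_add m y by simp
  finally show ?thesis .
qed

end

section \<open>Models with a base are standard\<close>

locale Kn_based = Kn_model +
  fixes bG bH :: "'a \<Rightarrow> 'a"
  assumes bG: "\<And>u. u \<in> K \<Longrightarrow> bG u \<in> Gs \<and> pg (bG u) = u"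
    and bH: "\<And>u. u \<in> K \<Longrightarrow> bH u \<in> Hs \<and> ph (bH u) = u"
    and Qbase: "\<And>us v. length us = n \<Longrightarrow> set us \<subseteq> K \<Longrightarrow> v \<in> K \<Longrightarrow>
        compat_idx n I (map \<kappa> us) (\<kappa> v) \<Longrightarrow> rel M SQ (map bG us @ [bH v])"
begin

definition coordG :: "'a \<Rightarrow> 'a" where "coordG x = (THE \<delta>. \<delta> \<in> G \<and> actg \<delta> (bG (pg x)) = x)"

definition coordH :: "'a \<Rightarrow> 'a" where "coordH y = (THE m. m \<in> H \<and> acth m (bH (ph y)) = y)"

definition support :: "'a \<Rightarrow> 'a set set" where "support \<gamma> = \<kappa> ` {u\<in>K. ev \<gamma> u = e}"

definition std_map :: "'a \<Rightarrow> 'a hs_elt" where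
  "std_map x = (if x \<in> I then EI x else if x \<in> K then EK (\<kappa> x) else if x \<in> H then EH (x = e)
     else if x \<in> G then EG (support x) else if x \<in> Gs then EGs (\<kappa> (pg x)) (support (coordG x))
     else EHs (\<kappa> (ph x)) (coordH x = e))"

lemma coordG_ex1: "x \<in> Gs \<Longrightarrow> \<exists>!\<delta>. \<delta> \<in> G \<and> actg \<delta> (bG (pg x)) = x"
  using regG bG[of "pg x"] pg_K[of x] by auto

lemma coordG: "x \<in> Gs \<Longrightarrow> coordG x \<in> G \<and> actg (coordG x) (bG (pg x)) = x"
  unfolding coordG_def by (rule theI'[OF coordG_ex1])

lemma coordG_unique: "x \<in> Gs \<Longrightarrow> \<delta> \<in> G \<Longrightarrow> actg \<delta> (bG (pg x)) = x \<Longrightarrow> coordG x = \<delta>"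
  using coordG_ex1 coordG by blast

lemma coordG_actg: "d \<in> G \<Longrightarrow> x \<in> Gs \<Longrightarrow> coordG (actg d x) = gadd d (coordG x)"
proof -
  assume a: "d \<in> G" "x \<in> Gs"
  have p: "pg (actg d x) = pg x" using pg_act a by blast
  have "actg (gadd d (coordG x)) (bG (pg x)) = actg d (actg (coordG x) (bG (pg x)))"
    using act_add a coordG bG pg_K by blast
  also have "\<dots> = actg d x" using coordG a by simp
  finally show ?thesis using coordG_unique[of "actg d x"] p a actg_Gs gadd_G coordG by simp
qed

lemma actg_base: "u \<in> K \<Longrightarrow> \<delta> \<in> G \<Longrightarrow> actg \<delta> (bG u) \<in> Gs \<and> pg (actg \<delta> (bG u)) = u \<and> coordG (actg \<delta> (bG u)) = \<delta>"
proof -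
  assume a: "u \<in> K" "\<delta> \<in> G"
  have 1: "actg \<delta> (bG u) \<in> Gs" using actg_Gs a bG by blast
  have 2: "pg (actg \<delta> (bG u)) = u" using pg_act a bG by auto
  show ?thesis using 1 2 coordG_unique[OF 1 a(2)] by simp
qed

lemma coordH_ex1: "x \<in> Hs \<Longrightarrow> \<exists>!m. m \<in> H \<and> acth m (bH (ph x)) = x"
  using regH bH[of "ph x"] ph_K[of x] by auto

lemma coordH: "x \<in> Hs \<Longrightarrow> coordH x \<in> H \<and> acth (coordH x) (bH (ph x)) = x"
  unfolding coordH_def by (rule theI'[OF coordH_ex1])

lemma coordH_unique: "x \<in> Hs \<Longrightarrow> m \<in> H \<Longrightarrow> acth m (bH (ph x)) = x \<Longrightarrow> coordH x = m"
  using coordH_ex1 coordH by blast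

lemma coordH_acth: "d \<in> H \<Longrightarrow> x \<in> Hs \<Longrightarrow> coordH (acth d x) = hadd d (coordH x)"
proof -
  assume a: "d \<in> H" "x \<in> Hs"
  have p: "ph (acth d x) = ph x" using ph_act a by blast
  have "acth (hadd d (coordH x)) (bH (ph x)) = acth d (acth (coordH x) (bH (ph x)))"
    using acth_add a coordH bH ph_K by blast
  also have "\<dots> = acth d x" using coordH a by simp
  finally show ?thesis using coordH_unique[of "acth d x"] p a acth_Hs hadd_H coordH by simp
qed

lemma acth_base: "u \<in> K \<Longrightarrow> m \<in> H \<Longrightarrow> acth m (bH u) \<in> Hs \<and> ph (acth m (bH u)) = u \<and> coordH (acth m (bH u)) = m"
proof -
  assume a: "u \<in> K" "m \<in> H"
  have 1: "acth m (bH u) \<in> Hs" using acth_Hs a bH by blast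
  have 2: "ph (acth m (bH u)) = u" using ph_act a bH by auto
  show ?thesis using 1 2 coordH_unique[OF 1 a(2)] by simp
qed

lemma mem_support_iff: "\<gamma> \<in> G \<Longrightarrow> u \<in> K \<Longrightarrow> \<kappa> u \<in> support \<gamma> \<longleftrightarrow> ev \<gamma> u = e"
proof -
  assume a: "\<gamma> \<in> G" "u \<in> K"
  show ?thesis
  proof
    assume "\<kappa> u \<in> support \<gamma>"
    then obtain u' where "u' \<in> K" "ev \<gamma> u' = e" "\<kappa> u = \<kappa> u'" unfolding support_def by blast
    then show "ev \<gamma> u = e" using kappa_inj[OF a(2)] by metis
  next
    assume "ev \<gamma> u = e" then show "\<kappa> u \<in> support \<gamma>" unfolding support_def using a by blast
  qed
qed

lemma support_std_G: "\<gamma> \<in> G \<Longrightarrow> support \<gamma> \<in> std_G n I"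
  unfolding support_def std_G_def using finite_support kappa_nsubsets by auto

lemma support_inj: "\<gamma> \<in> G \<Longrightarrow> \<delta> \<in> G \<Longrightarrow> support \<gamma> = support \<delta> \<Longrightarrow> \<gamma> = \<delta>"
proof -
  assume a: "\<gamma> \<in> G" "\<delta> \<in> G" "support \<gamma> = support \<delta>"
  have "ev \<gamma> u = ev \<delta> u" if "u \<in> K" for u
    using mem_support_iff[OF a(1) that] mem_support_iff[OF a(2) that] a(3) ev_cases[OF a(1) that] ev_cases[OF a(2) that] zne
    by auto
  then show ?thesis using G_eqI a by blast
qed

lemma support_surj: "g \<in> std_G n I \<Longrightarrow> \<exists>\<gamma>\<in>G. support \<gamma> = g"
proof -
  assume g: "g \<in> std_G n I"
  define T where "T = {u\<in>K. \<kappa> u \<in> g}"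
  have "finite g" using g by (simp add: std_G_def)
  moreover have "\<kappa> ` T \<subseteq> g" by (auto simp: T_def)
  ultimately have "finite (\<kappa> ` T)" by (rule finite_subset[rotated])
  moreover have "inj_on \<kappa> T" using kappa_inj by (auto simp: T_def inj_on_def)
  ultimately have "finite T" by (rule finite_imageD)
  then obtain \<gamma> where \<gamma>: "\<gamma> \<in> G" "\<And>u. u \<in> K \<Longrightarrow> ev \<gamma> u = (if u \<in> T then e else z)"
    using G_with_support[of T] by (auto simp: T_def)
  have "ev \<gamma> u = e \<longleftrightarrow> u \<in> T" if "u \<in> K" for u using \<gamma>(2)[OF that] zne by auto
  then have "{u\<in>K. ev \<gamma> u = e} = T" by (auto simp: T_def)
  moreover have "\<kappa> ` T = g" using g kappa_surj by (fastforce simp: T_def std_G_def)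
  ultimately show ?thesis using \<gamma>(1) by (auto simp: support_def)
qed

lemma support_gadd: "\<gamma> \<in> G \<Longrightarrow> \<delta> \<in> G \<Longrightarrow> support (gadd \<gamma> \<delta>) = symdiff (support \<gamma>) (support \<delta>)"
proof -
  assume a: "\<gamma> \<in> G" "\<delta> \<in> G"
  have ev: "ev (gadd \<gamma> \<delta>) u = e \<longleftrightarrow> (ev \<gamma> u = e) \<noteq> (ev \<delta> u = e)" if "u \<in> K" for u
  proof -
    have "ev (gadd \<gamma> \<delta>) u = hadd (ev \<gamma> u) (ev \<delta> u)" using ev_add a that by blast
    also have "\<dots> = (if ev \<gamma> u = ev \<delta> u then z else e)" using hadd_eq ev_H a that by blast
    finally show ?thesis using ev_cases[OF a(1) that] ev_cases[OF a(2) that] zne by auto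
  qed
  show ?thesis
  proof (rule set_eqI)
    fix s
    show "s \<in> support (gadd \<gamma> \<delta>) \<longleftrightarrow> s \<in> symdiff (support \<gamma>) (support \<delta>)"
    proof (cases "\<exists>u\<in>K. \<kappa> u = s")
      case True
      then obtain u where u: "u \<in> K" "\<kappa> u = s" by blast
      show ?thesis using mem_support_iff[OF gadd_G[OF a] u(1)] mem_support_iff[OF a(1) u(1)] mem_support_iff[OF a(2) u(1)] ev[OF u(1)] u(2)
        by (auto simp: symdiff_def)
    next
      case False
      then show ?thesis unfolding support_def symdiff_def by auto
    qed
  qed
qed

lemma std_map_I: "x \<in> I \<Longrightarrow> std_map x = EI x" by (simp add: std_map_def)
lemma std_map_K: "x \<in> K \<Longrightarrow> std_map x = EK (\<kappa> x)" using sorts_disjoint(2) by (simp add: std_map_def)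
lemma std_map_H: "x \<in> H \<Longrightarrow> std_map x = EH (x = e)" using sorts_disjoint(3) by (simp add: std_map_def)
lemma std_map_G: "x \<in> G \<Longrightarrow> std_map x = EG (support x)" using sorts_disjoint(4) by (simp add: std_map_def)
lemma std_map_Gs: "x \<in> Gs \<Longrightarrow> std_map x = EGs (\<kappa> (pg x)) (support (coordG x))" using sorts_disjoint(5) by (simp add: std_map_def)
lemma std_map_Hs: "x \<in> Hs \<Longrightarrow> std_map x = EHs (\<kappa> (ph x)) (coordH x = e)" using sorts_disjoint(6) by (simp add: std_map_def)

lemma std_map_cases:
  assumes "x \<in> univ M"
  obtains "x \<in> I" "std_map x = EI x" | "x \<in> K" "std_map x = EK (\<kappa> x)" | "x \<in> H" "std_map x = EH (x = e)"
   | "x \<in> G" "std_map x = EG (support x)" | "x \<in> Gs" "std_map x = EGs (\<kappa> (pg x)) (support (coordG x))"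
   | "x \<in> Hs" "std_map x = EHs (\<kappa> (ph x)) (coordH x = e)"
  using univ_cases[OF assms] std_map_I std_map_K std_map_H std_map_G std_map_Gs std_map_Hs by blast

lemma std_map_eq_EI: "x \<in> univ M \<Longrightarrow> std_map x = EI i \<longleftrightarrow> x \<in> I \<and> i = x"
  by (erule std_map_cases) (auto dest: sorts_disjoint(1))

lemma std_map_eq_EK: "x \<in> univ M \<Longrightarrow> std_map x = EK s \<longleftrightarrow> x \<in> K \<and> s = \<kappa> x"
  by (erule std_map_cases) (auto dest: sorts_disjoint(2))

lemma std_map_eq_EH: "x \<in> univ M \<Longrightarrow> std_map x = EH b \<longleftrightarrow> x \<in> H \<and> b = (x = e)"
  by (erule std_map_cases) (auto dest: sorts_disjoint(3))

lemma std_map_eq_EG: "x \<in> univ M \<Longrightarrow> std_map x = EG g \<longleftrightarrow> x \<in> G \<and> g = support x"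
  by (erule std_map_cases) (auto dest: sorts_disjoint(4))

lemma std_map_eq_EGs: "x \<in> univ M \<Longrightarrow> std_map x = EGs s g \<longleftrightarrow> x \<in> Gs \<and> s = \<kappa> (pg x) \<and> g = support (coordG x)"
  by (erule std_map_cases) (auto dest: sorts_disjoint(5))

lemma std_map_eq_EHs: "x \<in> univ M \<Longrightarrow> std_map x = EHs s b \<longleftrightarrow> x \<in> Hs \<and> s = \<kappa> (ph x) \<and> b = (coordH x = e)"
  by (erule std_map_cases) (auto dest: sorts_disjoint(6))

lemmas std_map_eq_E = std_map_eq_EI std_map_eq_EK std_map_eq_EH std_map_eq_EG std_map_eq_EGs std_map_eq_EHs

lemma inj_on_std_map: "inj_on std_map (univ M)"
proof
  fix x y assume x: "x \<in> univ M" and y: "y \<in> univ M" and eq: "std_map x = std_map y"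
  show "x = y"
  proof (cases rule: std_map_cases[OF x])
    case 1 then show ?thesis using eq std_map_eq_EI[OF y] by auto
  next
    case 2 then show ?thesis using eq std_map_eq_EK[OF y] kappa_inj by auto
  next
    case 3 then show ?thesis using eq std_map_eq_EH[OF y] H_eqI by auto
  next
    case 4 then show ?thesis using eq std_map_eq_EG[OF y] support_inj by auto
  next
    case 5
    then have yy: "y \<in> Gs" "\<kappa> (pg x) = \<kappa> (pg y)" "support (coordG x) = support (coordG y)" using eq std_map_eq_EGs[OF y] by auto
    then have "pg x = pg y" using kappa_inj pg_K 5 by blast
    moreover have "coordG x = coordG y" using support_inj coordG yy 5 by blast
    ultimately show ?thesis using coordG 5 yy by metis
  next
    case 6
    then have yy: "y \<in> Hs" "\<kappa> (ph x) = \<kappa> (ph y)" "(coordH x = e) = (coordH y = e)" using eq std_map_eq_EHs[OF y] by auto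
    then have "ph x = ph y" using kappa_inj ph_K 6 by blast
    moreover have "coordH x = coordH y" using H_eqI coordH yy 6 by blast
    ultimately show ?thesis using coordH 6 yy by metis
  qed
qed

lemma std_map_in_std_univ: "x \<in> univ M \<Longrightarrow> std_map x \<in> std_univ n I"
  by (erule std_map_cases)
    (auto simp: std_univ_def kappa_nsubsets support_std_G pg_K ph_K coordG)

lemma std_univ_subset_image: "std_univ n I \<subseteq> std_map ` univ M"
proof
  fix y assume y: "y \<in> std_univ n I"
  show "y \<in> std_map ` univ M"
  proof (cases y)
    case (EI i)
    then show ?thesis using y by (auto simp: std_univ_def std_map_I I_univ intro!: image_eqI[of _ _ i])
  next
    case (EK s)
    then obtain u where "u \<in> K" "\<kappa> u = s" using y kappa_surj by (auto simp: std_univ_def)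
    then show ?thesis using EK by (auto simp: std_map_K K_univ intro!: image_eqI[of _ _ u])
  next
    case (EH b)
    then show ?thesis using z_H e_H zne
      by (auto simp: std_map_H H_univ intro!: image_eqI[of _ _ "if b then e else z"])
  next
    case (EG g)
    then obtain \<gamma> where "\<gamma> \<in> G" "support \<gamma> = g" using y support_surj by (auto simp: std_univ_def)
    then show ?thesis using EG by (auto simp: std_map_G G_univ intro!: image_eqI[of _ _ \<gamma>])
  next
    case (EGs s g)
    then have "s \<in> nsubsets n I" "g \<in> std_G n I" using y by (auto simp: std_univ_def)
    then obtain u \<gamma> where u: "u \<in> K" "\<kappa> u = s" "\<gamma> \<in> G" "support \<gamma> = g"
      using kappa_surj support_surj by blast
    then show ?thesis using EGs actg_base[OF u(1,3)]
      by (auto simp: std_map_Gs Gs_univ intro!: image_eqI[of _ _ "actg \<gamma> (bG u)"])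
  next
    case (EHs s b)
    then obtain u where u: "u \<in> K" "\<kappa> u = s" using y kappa_surj by (auto simp: std_univ_def)
    define m where "m = (if b then e else z)"
    have "m \<in> H" "(m = e) = b" using z_H e_H zne by (auto simp: m_def)
    then show ?thesis using EHs u acth_base[OF u(1), of m]
      by (auto simp: std_map_Hs Hs_univ intro!: image_eqI[of _ _ "acth m (bH u)"])
  qed
qed

lemma bij_betw_std_map: "bij_betw std_map (univ M) (std_univ n I)"
  using inj_on_std_map std_map_in_std_univ std_univ_subset_image by (auto simp: bij_betw_def)

lemma std_rel_length: "std_rel n J S ys \<Longrightarrow> length ys = hs_arity n S"
  by (cases S) auto

text \<open>Every tuple is obtained from the base tuple with the same stalk indices by acting with its
  coordinates, so equivariance reduces \<open>Q\<close> to a parity condition on the coordinates.\<close>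

lemma Q_iff_odd_supports:
  assumes xs: "set xs \<subseteq> Gs" "length xs = n" and y: "y \<in> Hs"
    and c: "compat_idx n I (map (\<kappa> \<circ> pg) xs) (\<kappa> (ph y))"
  shows "rel M SQ (xs @ [y]) \<longleftrightarrow>
    ((coordH y = e) \<longleftrightarrow> odd (length (filter (\<lambda>\<gamma>. \<kappa> (ph y) \<in> \<gamma>) (map (support \<circ> coordG) xs))))"
proof -
  define bs where "bs = map (bG \<circ> pg) xs"
  have bs: "set bs \<subseteq> Gs" "map (\<kappa> \<circ> pg) bs = map (\<kappa> \<circ> pg) xs" "length bs = n"
    using xs bG pg_K by (auto simp: bs_def)
  have base: "rel M SQ (bs @ [bH (ph y)])"
    using Qbase[of "map pg xs" "ph y"] xs y c pg_K ph_K by (auto simp: bs_def)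
  have act: "map2 actg (map coordG xs) bs = xs"
    unfolding bs_def using xs(1) coordG by (induction xs) auto
  have y_eq: "acth (coordH y) (bH (ph y)) = y" using coordH y by simp
  have count: "length (filter (\<lambda>\<gamma>. ev \<gamma> (ph (bH (ph y))) = e) (map coordG xs)) =
      length (filter (\<lambda>\<gamma>. \<kappa> (ph y) \<in> \<gamma>) (map (support \<circ> coordG) xs))"
    using xs(1) bH ph_K[OF y] by (induction xs) (auto simp: mem_support_iff coordG)
  have "rel M SQ (map2 actg (map coordG xs) bs @ [acth (coordH y) (bH (ph y))]) \<longleftrightarrow>
      (rel M SQ (bs @ [bH (ph y)]) \<longleftrightarrow> even (length (filter (\<lambda>\<gamma>. ev \<gamma> (ph (bH (ph y))) = e)
        (map coordG xs)) + (if coordH y = e then 1 else 0)))"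
    by (rule Q_actg_acth_iff) (use bs xs c y coordG coordH bH ph_K in auto)
  then have "rel M SQ (xs @ [y]) \<longleftrightarrow> even (length (filter (\<lambda>\<gamma>. \<kappa> (ph y) \<in> \<gamma>)
      (map (support \<circ> coordG) xs)) + (if coordH y = e then 1 else 0))"
    unfolding act y_eq count using base by simp
  then show ?thesis by auto
qed

lemma map_std_map_Gs:
  "set xs \<subseteq> Gs \<Longrightarrow> map std_map xs = map2 EGs (map (\<kappa> \<circ> pg) xs) (map (support \<circ> coordG) xs)"
  by (induction xs) (auto simp: std_map_Gs)

lemma map_std_map_eq_map2_EGs:
  assumes "set xs \<subseteq> univ M" "map std_map xs = map2 EGs us \<gamma>s"
    and "length us = length xs" "length \<gamma>s = length xs"
  shows "set xs \<subseteq> Gs \<and> us = map (\<kappa> \<circ> pg) xs \<and> \<gamma>s = map (support \<circ> coordG) xs"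
  using assms
proof (induction xs arbitrary: us \<gamma>s)
  case (Cons x xs)
  then obtain u us' \<gamma> \<gamma>s' where "us = u # us'" "\<gamma>s = \<gamma> # \<gamma>s'" by (auto simp: length_Suc_conv)
  then show ?case using Cons std_map_eq_EGs[of x] by auto
qed simp

lemma H_eq_iff: "x \<in> H \<Longrightarrow> (c = x \<longleftrightarrow> c \<in> H \<and> ((c = e) = (x = e)))"
  using H_eqI by blast

lemma eq_actg_iff: "d \<in> G \<Longrightarrow> x \<in> Gs \<Longrightarrow> y = actg d x \<longleftrightarrow> y \<in> Gs \<and> pg y = pg x \<and> coordG y = gadd d (coordG x)"
proof
  assume a: "d \<in> G" "x \<in> Gs" "y = actg d x"
  then show "y \<in> Gs \<and> pg y = pg x \<and> coordG y = gadd d (coordG x)" using actg_Gs pg_act coordG_actg by blast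
next
  assume a: "d \<in> G" "x \<in> Gs" and b: "y \<in> Gs \<and> pg y = pg x \<and> coordG y = gadd d (coordG x)"
  have "y = actg (coordG y) (bG (pg y))" using coordG[of y] b by (simp only: eq_commute)
  also have "\<dots> = actg (gadd d (coordG x)) (bG (pg x))" using b by simp
  also have "\<dots> = actg d (actg (coordG x) (bG (pg x)))" using act_add a coordG bG pg_K by blast
  also have "\<dots> = actg d x" using coordG a by simp
  finally show "y = actg d x" .
qed

lemma eq_acth_iff: "d \<in> H \<Longrightarrow> x \<in> Hs \<Longrightarrow> y = acth d x \<longleftrightarrow> y \<in> Hs \<and> ph y = ph x \<and> coordH y = hadd d (coordH x)"
proof
  assume a: "d \<in> H" "x \<in> Hs" "y = acth d x"
  then show "y \<in> Hs \<and> ph y = ph x \<and> coordH y = hadd d (coordH x)" using acth_Hs ph_act coordH_acth by blast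
next
  assume a: "d \<in> H" "x \<in> Hs" and b: "y \<in> Hs \<and> ph y = ph x \<and> coordH y = hadd d (coordH x)"
  have "y = acth (coordH y) (bH (ph y))" using coordH[of y] b by (simp only: eq_commute)
  also have "\<dots> = acth (hadd d (coordH x)) (bH (ph x))" using b by simp
  also have "\<dots> = acth d (acth (coordH x) (bH (ph x)))" using acth_add a coordH bH ph_K by blast
  also have "\<dots> = acth d x" using coordH a by simp
  finally show "y = acth d x" .
qed

lemma std_map_rel_SI: "a \<in> univ M \<Longrightarrow> rel M SI [a] \<longleftrightarrow> std_rel n I SI [std_map a]"
  by (simp add: rel_sort_iff(1) std_map_eq_E)

lemma std_map_rel_SK: "a \<in> univ M \<Longrightarrow> rel M SK [a] \<longleftrightarrow> std_rel n I SK [std_map a]"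
  using kappa_nsubsets by (auto simp add: rel_sort_iff(2) std_map_eq_E)

lemma std_map_rel_SH: "a \<in> univ M \<Longrightarrow> rel M SH [a] \<longleftrightarrow> std_rel n I SH [std_map a]"
  by (simp add: rel_sort_iff(3) std_map_eq_E)

lemma std_map_rel_SG: "a \<in> univ M \<Longrightarrow> rel M SG [a] \<longleftrightarrow> std_rel n I SG [std_map a]"
  using support_std_G by (auto simp add: rel_sort_iff(4) std_map_eq_E)

lemma std_map_rel_SGs: "a \<in> univ M \<Longrightarrow> rel M SGs [a] \<longleftrightarrow> std_rel n I SGs [std_map a]"
  using support_std_G coordG kappa_nsubsets pg_K by (auto simp add: rel_sort_iff(5) std_map_eq_E)

lemma std_map_rel_SHs: "a \<in> univ M \<Longrightarrow> rel M SHs [a] \<longleftrightarrow> std_rel n I SHs [std_map a]"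
  using kappa_nsubsets ph_K by (auto simp add: rel_sort_iff(6) std_map_eq_E)

lemma std_map_rel_SMem: "a \<in> univ M \<Longrightarrow> b \<in> univ M \<Longrightarrow> rel M SMem [a, b] \<longleftrightarrow> std_rel n I SMem [std_map a, std_map b]"
proof -
  assume u: "a \<in> univ M" "b \<in> univ M"
  have "rel M SMem [a, b] \<longleftrightarrow> a \<in> I \<and> b \<in> K \<and> a \<in> \<kappa> b" using memrel mem_kappa by blast
  moreover have "std_rel n I SMem [std_map a, std_map b] \<longleftrightarrow> a \<in> I \<and> b \<in> K \<and> a \<in> \<kappa> b \<and> \<kappa> b \<in> nsubsets n I"
    using u by (simp add: std_map_eq_E) blast
  ultimately show ?thesis using kappa_nsubsets by blast
qed

lemma std_map_rel_SHAdd: "a \<in> univ M \<Longrightarrow> b \<in> univ M \<Longrightarrow> c \<in> univ M \<Longrightarrow>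
   rel M SHAdd [a, b, c] \<longleftrightarrow> std_rel n I SHAdd [std_map a, std_map b, std_map c]"
proof -
  assume u: "a \<in> univ M" "b \<in> univ M" "c \<in> univ M"
  have 1: "rel M SHAdd [a, b, c] \<longleftrightarrow> a \<in> H \<and> b \<in> H \<and> c = hadd a b" by (rule graph2_rel[OF haddg])
  have 2: "std_rel n I SHAdd [std_map a, std_map b, std_map c] \<longleftrightarrow> a \<in> H \<and> b \<in> H \<and> c \<in> H \<and> (c = e) = ((a = e) \<noteq> (b = e))"
    using u by (simp add: std_map_eq_E) blast
  show ?thesis unfolding 1 2
  proof (cases "a \<in> H \<and> b \<in> H")
    case True
    then have "c = hadd a b \<longleftrightarrow> c \<in> H \<and> ((c = e) = ((a = e) \<noteq> (b = e)))"
      using H_eq_iff[OF hadd_H[of a b]] hadd_eq_e_iff[of a b] by simp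
    then show "(a \<in> H \<and> b \<in> H \<and> c = hadd a b) = (a \<in> H \<and> b \<in> H \<and> c \<in> H \<and> (c = e) = ((a = e) \<noteq> (b = e)))"
      using True by simp
  qed auto
qed

lemma std_map_rel_SGAdd: "a \<in> univ M \<Longrightarrow> b \<in> univ M \<Longrightarrow> c \<in> univ M \<Longrightarrow>
   rel M SGAdd [a, b, c] \<longleftrightarrow> std_rel n I SGAdd [std_map a, std_map b, std_map c]"
proof -
  assume u: "a \<in> univ M" "b \<in> univ M" "c \<in> univ M"
  have 1: "rel M SGAdd [a, b, c] \<longleftrightarrow> a \<in> G \<and> b \<in> G \<and> c = gadd a b" by (rule graph2_rel[OF gaddg])
  have 2: "std_rel n I SGAdd [std_map a, std_map b, std_map c] \<longleftrightarrow> a \<in> G \<and> b \<in> G \<and> c \<in> G \<and> support c = symdiff (support a) (support b)"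
    using u support_std_G by (simp add: std_map_eq_E) blast
  show ?thesis unfolding 1 2
  proof (cases "a \<in> G \<and> b \<in> G")
    case True
    then have "c = gadd a b \<longleftrightarrow> c \<in> G \<and> support c = symdiff (support a) (support b)"
      using support_gadd[of a b] support_inj[of c "gadd a b"] gadd_G[of a b] by auto
    then show "(a \<in> G \<and> b \<in> G \<and> c = gadd a b) = (a \<in> G \<and> b \<in> G \<and> c \<in> G \<and> support c = symdiff (support a) (support b))"
      using True by simp
  qed auto
qed

lemma std_map_rel_SEv: "a \<in> univ M \<Longrightarrow> b \<in> univ M \<Longrightarrow> c \<in> univ M \<Longrightarrow>
   rel M SEv [a, b, c] \<longleftrightarrow> std_rel n I SEv [std_map a, std_map b, std_map c]"
proof -
  assume u: "a \<in> univ M" "b \<in> univ M" "c \<in> univ M"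
  have 1: "rel M SEv [a, b, c] \<longleftrightarrow> a \<in> G \<and> b \<in> K \<and> c = ev a b" by (rule graph2_rel[OF evg])
  have 2: "std_rel n I SEv [std_map a, std_map b, std_map c] \<longleftrightarrow> a \<in> G \<and> b \<in> K \<and> c \<in> H \<and> (c = e) = (\<kappa> b \<in> support a)"
    using u support_std_G kappa_nsubsets by (simp add: std_map_eq_E) blast
  show ?thesis unfolding 1 2
  proof (cases "a \<in> G \<and> b \<in> K")
    case True
    then have "c = ev a b \<longleftrightarrow> c \<in> H \<and> ((c = e) = (\<kappa> b \<in> support a))"
      using mem_support_iff[of a b] H_eq_iff[OF ev_H[of a b]] by simp
    then show "(a \<in> G \<and> b \<in> K \<and> c = ev a b) = (a \<in> G \<and> b \<in> K \<and> c \<in> H \<and> (c = e) = (\<kappa> b \<in> support a))"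
      using True by simp
  qed auto
qed

lemma Gs_std_coords: "a \<in> Gs \<Longrightarrow> \<kappa> (pg a) \<in> nsubsets n I \<and> support (coordG a) \<in> std_G n I"
  using kappa_nsubsets pg_K support_std_G coordG by blast

lemma Hs_std_coords: "a \<in> Hs \<Longrightarrow> \<kappa> (ph a) \<in> nsubsets n I"
  using kappa_nsubsets ph_K by blast

lemma std_map_rel_SSupp: "a \<in> univ M \<Longrightarrow> b \<in> univ M \<Longrightarrow> rel M SSupp [a, b] \<longleftrightarrow> std_rel n I SSupp [std_map a, std_map b]"
proof -
  assume u: "a \<in> univ M" "b \<in> univ M"
  have 2: "std_rel n I SSupp [std_map a, std_map b] \<longleftrightarrow> a \<in> G \<and> b \<in> K \<and> \<kappa> b \<in> support a"
    using u support_std_G kappa_nsubsets by (simp add: std_map_eq_E) blast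
  have 1: "rel M SSupp [a, b] \<longleftrightarrow> a \<in> G \<and> b \<in> K \<and> ev a b = e" using supp by blast
  show ?thesis unfolding 1 2
  proof (cases "a \<in> G \<and> b \<in> K")
    case True then show "(a \<in> G \<and> b \<in> K \<and> ev a b = e) = (a \<in> G \<and> b \<in> K \<and> \<kappa> b \<in> support a)"
      using mem_support_iff[of a b] by simp
  qed auto
qed

lemma std_map_rel_SPG: "a \<in> univ M \<Longrightarrow> b \<in> univ M \<Longrightarrow> rel M SPG [a, b] \<longleftrightarrow> std_rel n I SPG [std_map a, std_map b]"
proof -
  assume u: "a \<in> univ M" "b \<in> univ M"
  have 1: "rel M SPG [a, b] \<longleftrightarrow> a \<in> Gs \<and> b = pg a" by (rule graph1_rel[OF pgg])
  have 2: "std_rel n I SPG [std_map a, std_map b] \<longleftrightarrow> a \<in> Gs \<and> b \<in> K \<and> \<kappa> (pg a) = \<kappa> b"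
    using u by (auto simp add: std_map_eq_E dest: Gs_std_coords)
  show ?thesis unfolding 1 2
  proof (cases "a \<in> Gs")
    case True then show "(a \<in> Gs \<and> b = pg a) = (a \<in> Gs \<and> b \<in> K \<and> \<kappa> (pg a) = \<kappa> b)"
      using kappa_inj[of b "pg a"] pg_K[of a] by auto
  qed auto
qed

lemma std_map_rel_SPH: "a \<in> univ M \<Longrightarrow> b \<in> univ M \<Longrightarrow> rel M SPH [a, b] \<longleftrightarrow> std_rel n I SPH [std_map a, std_map b]"
proof -
  assume u: "a \<in> univ M" "b \<in> univ M"
  have 1: "rel M SPH [a, b] \<longleftrightarrow> a \<in> Hs \<and> b = ph a" by (rule graph1_rel[OF phg])
  have 2: "std_rel n I SPH [std_map a, std_map b] \<longleftrightarrow> a \<in> Hs \<and> b \<in> K \<and> \<kappa> (ph a) = \<kappa> b"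
    using u by (auto simp add: std_map_eq_E dest: Hs_std_coords)
  show ?thesis unfolding 1 2
  proof (cases "a \<in> Hs")
    case True then show "(a \<in> Hs \<and> b = ph a) = (a \<in> Hs \<and> b \<in> K \<and> \<kappa> (ph a) = \<kappa> b)"
      using kappa_inj[of b "ph a"] ph_K[of a] by auto
  qed auto
qed

lemma std_map_rel_SActG: "a \<in> univ M \<Longrightarrow> b \<in> univ M \<Longrightarrow> c \<in> univ M \<Longrightarrow>
   rel M SActG [a, b, c] \<longleftrightarrow> std_rel n I SActG [std_map a, std_map b, std_map c]"
proof -
  assume u: "a \<in> univ M" "b \<in> univ M" "c \<in> univ M"
  have 1: "rel M SActG [a, b, c] \<longleftrightarrow> a \<in> G \<and> b \<in> Gs \<and> c = actg a b" by (rule graph2_rel[OF actgg])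
  have 2: "std_rel n I SActG [std_map a, std_map b, std_map c] \<longleftrightarrow> a \<in> G \<and> b \<in> Gs \<and> c \<in> Gs \<and> \<kappa> (pg c) = \<kappa> (pg b)
      \<and> support (coordG c) = symdiff (support a) (support (coordG b))"
    using u support_std_G by (auto simp add: std_map_eq_E dest: Gs_std_coords)
  show ?thesis unfolding 1 2
  proof (cases "a \<in> G \<and> b \<in> Gs")
    case True
    have A: "c = actg a b \<longleftrightarrow> c \<in> Gs \<and> pg c = pg b \<and> coordG c = gadd a (coordG b)" using eq_actg_iff[of a b c] True by simp
    have B:  "c \<in> Gs \<Longrightarrow> pg c = pg b \<longleftrightarrow> \<kappa> (pg c) = \<kappa> (pg b)"
    proof -
      assume c: "c \<in> Gs"
      have "pg c \<in> K" "pg b \<in> K" using pg_K c True by auto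
      then show ?thesis using kappa_inj by metis
    qed
    have C:  "c \<in> Gs \<Longrightarrow> coordG c = gadd a (coordG b) \<longleftrightarrow> support (coordG c) = symdiff (support a) (support (coordG b))"
    proof -
      assume c: "c \<in> Gs"
      have graph1_rel: "coordG c \<in> G" using coordG c by blast
      have graph2_rel: "gadd a (coordG b) \<in> G" using gadd_G True coordG by blast
      have "support (gadd a (coordG b)) = symdiff (support a) (support (coordG b))" using support_gadd True coordG by blast
      moreover have "coordG c = gadd a (coordG b) \<longleftrightarrow> support (coordG c) = support (gadd a (coordG b))"
        using support_inj[OF graph1_rel graph2_rel] by (intro iffI) simp_all
      ultimately show ?thesis by simp
    qed
    have D: "c = actg a b \<longleftrightarrow> c \<in> Gs \<and> \<kappa> (pg c) = \<kappa> (pg b) \<and> support (coordG c) = symdiff (support a) (support (coordG b))"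
    proof (cases "c \<in> Gs")
      case True then show ?thesis using A B C by simp
    next
      case False then show ?thesis using A by simp
    qed
    show "(a \<in> G \<and> b \<in> Gs \<and> c = actg a b) = (a \<in> G \<and> b \<in> Gs \<and> c \<in> Gs \<and> \<kappa> (pg c) = \<kappa> (pg b)
      \<and> support (coordG c) = symdiff (support a) (support (coordG b)))" using True D by simp
  qed auto
qed

lemma std_map_rel_SActH: "a \<in> univ M \<Longrightarrow> b \<in> univ M \<Longrightarrow> c \<in> univ M \<Longrightarrow>
   rel M SActH [a, b, c] \<longleftrightarrow> std_rel n I SActH [std_map a, std_map b, std_map c]"
proof -
  assume u: "a \<in> univ M" "b \<in> univ M" "c \<in> univ M"
  have 1: "rel M SActH [a, b, c] \<longleftrightarrow> a \<in> H \<and> b \<in> Hs \<and> c = acth a b" by (rule graph2_rel[OF acthg])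
  have 2: "std_rel n I SActH [std_map a, std_map b, std_map c] \<longleftrightarrow> a \<in> H \<and> b \<in> Hs \<and> c \<in> Hs \<and> \<kappa> (ph c) = \<kappa> (ph b)
      \<and> (coordH c = e) = ((a = e) \<noteq> (coordH b = e))"
    using u by (auto simp add: std_map_eq_E dest: Hs_std_coords)
  show ?thesis unfolding 1 2
  proof (cases "a \<in> H \<and> b \<in> Hs")
    case True
    have A: "c = acth a b \<longleftrightarrow> c \<in> Hs \<and> ph c = ph b \<and> coordH c = hadd a (coordH b)" using eq_acth_iff[of a b c] True by simp
    have B:  "c \<in> Hs \<Longrightarrow> ph c = ph b \<longleftrightarrow> \<kappa> (ph c) = \<kappa> (ph b)"
    proof -
      assume c: "c \<in> Hs"
      have "ph c \<in> K" "ph b \<in> K" using ph_K c True by auto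
      then show ?thesis using kappa_inj by metis
    qed
    have C:  "c \<in> Hs \<Longrightarrow> coordH c = hadd a (coordH b) \<longleftrightarrow> (coordH c = e) = ((a = e) \<noteq> (coordH b = e))"
    proof -
      assume c: "c \<in> Hs"
      have h1: "coordH c \<in> H" using coordH c by blast
      have h2: "coordH b \<in> H" using coordH True by blast
      have "coordH c = hadd a (coordH b) \<longleftrightarrow> (coordH c = e) = (hadd a (coordH b) = e)"
        using H_eq_iff[OF hadd_H[OF _ h2], of a "coordH c"] h1 True by simp
      also have "(hadd a (coordH b) = e) = ((a = e) \<noteq> (coordH b = e))" using hadd_eq_e_iff[OF _ h2, of a] True by simp
      finally show ?thesis .
    qed
    have D: "c = acth a b \<longleftrightarrow> c \<in> Hs \<and> \<kappa> (ph c) = \<kappa> (ph b) \<and> (coordH c = e) = ((a = e) \<noteq> (coordH b = e))"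
    proof (cases "c \<in> Hs")
      case True then show ?thesis using A B C by simp
    next
      case False then show ?thesis using A by simp
    qed
    show "(a \<in> H \<and> b \<in> Hs \<and> c = acth a b) = (a \<in> H \<and> b \<in> Hs \<and> c \<in> Hs \<and> \<kappa> (ph c) = \<kappa> (ph b)
      \<and> (coordH c = e) = ((a = e) \<noteq> (coordH b = e)))" using True D by simp
  qed auto
qed

lemma std_map_rel_SQ:
  assumes "set zs \<subseteq> univ M"
  shows "rel M SQ zs \<longleftrightarrow> std_rel n I SQ (map std_map zs)"
proof
  assume "rel M SQ zs"
  then obtain xs y where xy: "zs = xs @ [y]" "length xs = n" "set xs \<subseteq> Gs" "y \<in> Hs"
     "compat_idx n I (map (\<kappa> \<circ> pg) xs) (\<kappa> (ph y))" using Qcomp by blast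
  then have parity: "(coordH y = e) = odd (length (filter (\<lambda>\<gamma>. \<kappa> (ph y) \<in> \<gamma>) (map (support \<circ> coordG) xs)))"
    using Q_iff_odd_supports \<open>rel M SQ zs\<close> by blast
  have zs: "map std_map zs = map2 EGs (map (\<kappa> \<circ> pg) xs) (map (support \<circ> coordG) xs) @ [EHs (\<kappa> (ph y)) (coordH y = e)]"
    using xy(1) map_std_map_Gs[OF xy(3)] std_map_Hs[OF xy(4)] by simp
  have "length (map (\<kappa> \<circ> pg) xs) = n" "set (map (\<kappa> \<circ> pg) xs) \<subseteq> nsubsets n I"
    using xy(2,3) kappa_nsubsets pg_K by auto
  moreover have "length (map (support \<circ> coordG) xs) = n" "set (map (support \<circ> coordG) xs) \<subseteq> std_G n I"
    using xy(2,3) support_std_G coordG by auto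
  moreover have "\<kappa> (ph y) \<in> nsubsets n I" using kappa_nsubsets ph_K xy(4) by blast
  ultimately show "std_rel n I SQ (map std_map zs)"
    unfolding std_rel.simps using xy(5) parity zs by blast
next
  assume "std_rel n I SQ (map std_map zs)"
  then obtain us \<gamma>s v m where c: "length us = n" "length \<gamma>s = n" "compat_idx n I us v"
      "m = odd (length (filter (\<lambda>\<gamma>. v \<in> \<gamma>) \<gamma>s))"
    and zs: "map std_map zs = map2 EGs us \<gamma>s @ [EHs v m]" unfolding std_rel.simps by blast
  define xs y where "xs = butlast zs" and "y = last zs"
  have "zs \<noteq> []" using zs by auto
  then have "zs = xs @ [y]" by (simp add: xs_def y_def)
  then have xy: "zs = xs @ [y]" "map std_map xs = map2 EGs us \<gamma>s" "std_map y = EHs v m"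
    using zs by simp_all
  have "length xs = n" using arg_cong[OF xy(2), of length] c(1,2) by simp
  moreover have "set xs \<subseteq> Gs" "us = map (\<kappa> \<circ> pg) xs" "\<gamma>s = map (support \<circ> coordG) xs"
    using map_std_map_eq_map2_EGs[OF _ xy(2)] assms xy(1) c(1,2) \<open>length xs = n\<close> by auto
  moreover have "y \<in> Hs" "v = \<kappa> (ph y)" "m = (coordH y = e)"
    using std_map_eq_EHs[of y v m] assms xy(1,3) by auto
  ultimately show "rel M SQ zs" using Q_iff_odd_supports c xy(1) by simp
qed

lemma std_map_rel_iff:
  assumes "set xs \<subseteq> univ M"
  shows "rel M r xs \<longleftrightarrow> std_rel n I r (map std_map xs)"
proof -
  consider "r = SQ" | "r \<noteq> SQ" "length xs = hs_arity n r" | "length xs \<noteq> hs_arity n r" by blast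
  then show ?thesis
  proof cases
    case 1
    then show ?thesis using std_map_rel_SQ assms by simp
  next
    case 2
    then show ?thesis using assms
      by (cases r) (auto simp: length_Suc_conv eval_nat_numeral std_map_rel_SI std_map_rel_SK
        std_map_rel_SH std_map_rel_SG std_map_rel_SGs std_map_rel_SHs std_map_rel_SMem std_map_rel_SHAdd
        std_map_rel_SGAdd std_map_rel_SEv std_map_rel_SSupp std_map_rel_SPG std_map_rel_SActG
        std_map_rel_SPH std_map_rel_SActH simp del: std_rel.simps)
  next
    case 3
    then show ?thesis using rel_length[of r xs] std_rel_length[of I r "map std_map xs"] by auto
  qed
qed

lemma iso_std_map: "iso std_map M (std n I)"
  unfolding iso_def std_def using bij_betw_std_map std_map_rel_iff by simp

end

locale Kn_pair =
  Mx: Kn_model n M I1 K1 H1 G1 Gs1 Hs1 \<kappa>1 z1 e1 hadd1 gadd1 ev1 actg1 acth1 pg1 ph1 +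
  Nx: Kn_model n N I2 K2 H2 G2 Gs2 Hs2 \<kappa>2 z2 e2 hadd2 gadd2 ev2 actg2 acth2 pg2 ph2
  for n M I1 K1 H1 G1 Gs1 Hs1 \<kappa>1 z1 e1 hadd1 gadd1 ev1 actg1 acth1 pg1 ph1
    N I2 K2 H2 G2 Gs2 Hs2 \<kappa>2 z2 e2 hadd2 gadd2 ev2 actg2 acth2 pg2 ph2 +
  assumes elem_sub: "elem_sub M N"
begin

lemma rel_M_iff_rel_N: "set xs \<subseteq> univ M \<Longrightarrow> rel M r xs \<longleftrightarrow> rel N r xs"
  using elem_sub_rel_iff[OF elem_sub] Mx.H_univ Mx.z_H by blast

lemma sort_M_iff_sort_N:
  assumes "x \<in> univ M"
  shows "x \<in> I1 \<longleftrightarrow> x \<in> I2" "x \<in> K1 \<longleftrightarrow> x \<in> K2" "x \<in> H1 \<longleftrightarrow> x \<in> H2"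
    "x \<in> G1 \<longleftrightarrow> x \<in> G2" "x \<in> Gs1 \<longleftrightarrow> x \<in> Gs2" "x \<in> Hs1 \<longleftrightarrow> x \<in> Hs2"
  using rel_M_iff_rel_N[of "[x]"] assms by (auto simp: Mx.rel_sort_iff[symmetric] Nx.rel_sort_iff[symmetric])

lemma sorts_M_subset_N: "I1 \<subseteq> I2" "K1 \<subseteq> K2" "H1 \<subseteq> H2" "G1 \<subseteq> G2" "Gs1 \<subseteq> Gs2" "Hs1 \<subseteq> Hs2"
  using sort_M_iff_sort_N Mx.I_univ Mx.K_univ Mx.H_univ Mx.G_univ Mx.Gs_univ Mx.Hs_univ by blast+

lemma graph2_M_N:
  assumes "graph2 M S A1 B1 C1 f1" "graph2 N S A2 B2 C2 f2" "a \<in> A1" "b \<in> B1"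
  shows "f1 a b = f2 a b"
proof -
  have "rel M S [a, b, f1 a b]" using graph2_rel[OF assms(1)] assms(3,4) by simp
  then have "rel N S [a, b, f1 a b]" using rel_M_iff_rel_N Mx.rel_in_univ by blast
  then show ?thesis using graph2_rel[OF assms(2)] by simp
qed

lemma graph1_M_N:
  assumes "graph1 M S A1 B1 f1" "graph1 N S A2 B2 f2" "a \<in> A1"
  shows "f1 a = f2 a"
proof -
  have "rel M S [a, f1 a]" using graph1_rel[OF assms(1)] assms(3) by simp
  then have "rel N S [a, f1 a]" using rel_M_iff_rel_N Mx.rel_in_univ by blast
  then show ?thesis using graph1_rel[OF assms(2)] by simp
qed

lemma operations_M_N:
  "a \<in> H1 \<Longrightarrow> b \<in> H1 \<Longrightarrow> hadd1 a b = hadd2 a b"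
  "a \<in> G1 \<Longrightarrow> b \<in> G1 \<Longrightarrow> gadd1 a b = gadd2 a b"
  "a \<in> G1 \<Longrightarrow> b \<in> K1 \<Longrightarrow> ev1 a b = ev2 a b"
  "a \<in> G1 \<Longrightarrow> b \<in> Gs1 \<Longrightarrow> actg1 a b = actg2 a b"
  "a \<in> H1 \<Longrightarrow> b \<in> Hs1 \<Longrightarrow> acth1 a b = acth2 a b"
  "a \<in> Gs1 \<Longrightarrow> pg1 a = pg2 a"
  "a \<in> Hs1 \<Longrightarrow> ph1 a = ph2 a"
  using graph2_M_N[OF Mx.haddg Nx.haddg] graph2_M_N[OF Mx.gaddg Nx.gaddg] graph2_M_N[OF Mx.evg Nx.evg]
    graph2_M_N[OF Mx.actgg Nx.actgg] graph2_M_N[OF Mx.acthg Nx.acthg]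
    graph1_M_N[OF Mx.pgg Nx.pgg] graph1_M_N[OF Mx.phg Nx.phg] by blast+

lemma z_M_N: "z1 = z2"
  using Mx.hadd_self[OF Mx.e_H] operations_M_N(1)[OF Mx.e_H Mx.e_H] Nx.hadd_self sorts_M_subset_N(3) Mx.e_H
  by auto

lemma e_M_N: "e1 = e2"
  using sorts_M_subset_N(3) Mx.e_H Nx.Hze Mx.zne z_M_N by blast

lemma kappa_M_N: "u \<in> K1 \<Longrightarrow> \<kappa>1 u = \<kappa>2 u"
proof -
  assume u: "u \<in> K1"
  have "\<kappa>1 u \<subseteq> \<kappa>2 u"
  proof
    fix i assume "i \<in> \<kappa>1 u"
    then have "i \<in> I1" "rel M SMem [i, u]" using Mx.mem_kappa by auto
    then have "rel N SMem [i, u]" using rel_M_iff_rel_N Mx.rel_in_univ by blast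
    then show "i \<in> \<kappa>2 u" using Nx.mem_kappa Nx.memrel by blast
  qed
  moreover have "\<kappa>1 u \<in> nsubsets n I1" "\<kappa>2 u \<in> nsubsets n I2"
    using Mx.kappa_nsubsets u Nx.kappa_nsubsets sorts_M_subset_N(2) by auto
  ultimately show ?thesis by (simp add: nsubsets_def card_subset_eq)
qed

lemma K1_iff: "u \<in> K1 \<longleftrightarrow> u \<in> K2 \<and> \<kappa>2 u \<subseteq> I1"
proof
  assume "u \<in> K1"
  then show "u \<in> K2 \<and> \<kappa>2 u \<subseteq> I1"
    using sorts_M_subset_N(2) kappa_M_N Mx.kappa_nsubsets by (auto simp: nsubsets_def)
next
  assume u: "u \<in> K2 \<and> \<kappa>2 u \<subseteq> I1"
  then have "\<kappa>2 u \<in> nsubsets n I1" using Nx.kappa_nsubsets by (auto simp: nsubsets_def)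
  then obtain u' where u': "u' \<in> K1" "\<kappa>1 u' = \<kappa>2 u" using Mx.kappa_surj by blast
  then have "u' = u" using Nx.kappa_inj u kappa_M_N sorts_M_subset_N(2) by auto
  then show "u \<in> K1" using u' by simp
qed

text \<open>The support in \<open>N\<close> of an element of \<open>G(M)\<close> is the finite set \<open>S\<close> of its supports in \<open>M\<close>:
  a further support would be a witness of \<open>\<exists>x. Supp(\<gamma>, x) \<and> x \<notin> S\<close> in \<open>N\<close>, hence in \<open>M\<close>.\<close>

lemma support_M_N: "\<gamma> \<in> G1 \<Longrightarrow> u \<in> K2 \<Longrightarrow> ev2 \<gamma> u = e2 \<Longrightarrow> u \<in> K1"
proof (rule ccontr)
  assume \<gamma>: "\<gamma> \<in> G1" and u: "u \<in> K2" "ev2 \<gamma> u = e2" "u \<notin> K1"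
  define S where "S = {u\<in>K1. ev1 \<gamma> u = e1}"
  have "rel N SSupp [\<gamma>, u]" using Nx.supp \<gamma> sorts_M_subset_N(4) u by blast
  moreover have "finite S" "S \<subseteq> univ M" using Mx.finite_support[OF \<gamma>] Mx.K_univ by (auto simp: S_def)
  moreover have "u \<in> univ N" "u \<notin> S" using u Nx.K_univ by (auto simp: S_def)
  ultimately obtain u' where "u' \<notin> S" "rel M SSupp [\<gamma>, u']"
    using elem_sub_witness_avoiding[OF elem_sub Mx.G_univ[OF \<gamma>]] by metis
  then show False using Mx.supp by (auto simp: S_def)
qed

lemma ev_outside_M: "\<gamma> \<in> G1 \<Longrightarrow> u \<in> K2 \<Longrightarrow> u \<notin> K1 \<Longrightarrow> ev2 \<gamma> u = z2"
  using support_M_N[of \<gamma> u] Nx.ev_cases[of \<gamma> u] sorts_M_subset_N(4) by blast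

end

section \<open>A common base for a model and its elementary extension\<close>

locale Kn_pair_kuratowski = Kn_pair +
  fixes F :: "'a set \<Rightarrow> 'a set"
  assumes kuratowski: "kuratowski_map (n - 1) (univ N) F" and n_pos: "0 < n"
begin

definition pick :: "'a set \<Rightarrow> 'a set \<Rightarrow> 'a" where
  "pick W s = (SOME x. x \<in> W \<and> W - {x} \<noteq> s \<and> x \<in> \<Union>(F ` Pow (W - {x})) \<and> (\<not> W \<subseteq> I1 \<longrightarrow> \<not> W - {x} \<subseteq> I1))"

lemma pick:
  assumes "W \<subseteq> I2" "finite W" "card W = Suc n" "s \<subseteq> W" "card s = n"
  shows "pick W s \<in> W \<and> W - {pick W s} \<noteq> s \<and> pick W s \<in> \<Union>(F ` Pow (W - {pick W s})) \<and>
    (\<not> W \<subseteq> I1 \<longrightarrow> \<not> W - {pick W s} \<subseteq> I1)"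
proof -
  have "W \<subseteq> univ N" using assms(1) Nx.I_univ by blast
  from kuratowski_map_choose_point[OF n_pos kuratowski this assms(2-5), where J = I1]
  have "\<exists>x. x \<in> W \<and> W - {x} \<noteq> s \<and> x \<in> \<Union>(F ` Pow (W - {x})) \<and> (\<not> W \<subseteq> I1 \<longrightarrow> \<not> W - {x} \<subseteq> I1)"
    by (simp only: Bex_def)
  then show ?thesis unfolding pick_def by (rule someI_ex)
qed

definition point_G :: "'a \<Rightarrow> 'a" where
  "point_G u = (if u \<in> K1 then SOME x. x \<in> Gs1 \<and> pg1 x = u else SOME x. x \<in> Gs2 \<and> pg2 x = u)"

definition point_H :: "'a \<Rightarrow> 'a" where
  "point_H u = (if u \<in> K1 then SOME y. y \<in> Hs1 \<and> ph1 y = u else SOME y. y \<in> Hs2 \<and> ph2 y = u)"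

lemma point_G_M: "u \<in> K1 \<Longrightarrow> point_G u \<in> Gs1 \<and> pg1 (point_G u) = u"
  using Mx.some_point_in_stalk(1) by (simp add: point_G_def)

lemma point_H_M: "u \<in> K1 \<Longrightarrow> point_H u \<in> Hs1 \<and> ph1 (point_H u) = u"
  using Mx.some_point_in_stalk(2) by (simp add: point_H_def)

lemma point_G_N: "u \<in> K2 \<Longrightarrow> point_G u \<in> Gs2 \<and> pg2 (point_G u) = u"
  using point_G_M sorts_M_subset_N(5) operations_M_N(6) Nx.some_point_in_stalk(1)
  by (cases "u \<in> K1") (force, simp add: point_G_def)

lemma point_H_N: "u \<in> K2 \<Longrightarrow> point_H u \<in> Hs2 \<and> ph2 (point_H u) = u"
  using point_H_M sorts_M_subset_N(6) operations_M_N(7) Nx.some_point_in_stalk(2)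
  by (cases "u \<in> K1") (force, simp add: point_H_def)

definition stalk_list :: "'a set \<Rightarrow> 'a \<Rightarrow> 'a list" where
  "stalk_list W v = (SOME us. set us = {u\<in>K2. \<kappa>2 u \<subseteq> W \<and> u \<noteq> v} \<and> distinct us)"

lemma stalk_list:
  assumes "finite W"
  shows "set (stalk_list W v) = {u\<in>K2. \<kappa>2 u \<subseteq> W \<and> u \<noteq> v} \<and> distinct (stalk_list W v)"
proof -
  have "finite {u\<in>K2. \<kappa>2 u \<subseteq> W \<and> u \<noteq> v}"
    using Nx.finite_stalks_within[OF assms] by (rule rev_finite_subset) blast
  from finite_distinct_list[OF this] show ?thesis unfolding stalk_list_def by (rule someI_ex)
qed

definition initial_Q :: "'a \<Rightarrow> 'a set \<Rightarrow> bool" where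
  "initial_Q v W \<longleftrightarrow> rel N SQ (map point_G (stalk_list W v) @ [point_H v])"

text \<open>The stalk \<open>u\<close> corrects the coordinate \<open>v\<close> of the \<open>(n + 1)\<close>-set \<open>W = u \<union> v\<close> iff it is the stalk
  \<open>W - {pick W v}\<close> responsible for \<open>(W, v)\<close> and \<open>Q\<close> fails there on the initial points.\<close>

definition twist_support :: "'a \<Rightarrow> 'a set" where
  "twist_support u = {v\<in>K2. card (\<kappa>2 u \<union> \<kappa>2 v) = Suc n \<and>
     \<kappa>2 u = (\<kappa>2 u \<union> \<kappa>2 v) - {pick (\<kappa>2 u \<union> \<kappa>2 v) (\<kappa>2 v)} \<and> \<not> initial_Q v (\<kappa>2 u \<union> \<kappa>2 v)}"

lemma twist_support_pick:
  assumes u: "u \<in> K2" and v: "v \<in> twist_support u"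
  shows "\<kappa>2 v \<subseteq> \<kappa>2 u \<union> \<Union>(F ` Pow (\<kappa>2 u))" and "\<not> \<kappa>2 u \<union> \<kappa>2 v \<subseteq> I1 \<longrightarrow> \<not> \<kappa>2 u \<subseteq> I1"
proof -
  define W where "W = \<kappa>2 u \<union> \<kappa>2 v"
  have vK: "v \<in> K2" and cW: "card W = Suc n" and ku: "\<kappa>2 u = W - {pick W (\<kappa>2 v)}"
    using v unfolding twist_support_def W_def by auto
  have "\<kappa>2 u \<in> nsubsets n I2" "\<kappa>2 v \<in> nsubsets n I2" using Nx.kappa_nsubsets u vK by auto
  then have "W \<subseteq> I2" "finite W" "\<kappa>2 v \<subseteq> W" "card (\<kappa>2 v) = n" by (auto simp: W_def nsubsets_def)
  then have "pick W (\<kappa>2 v) \<in> W \<and> W - {pick W (\<kappa>2 v)} \<noteq> \<kappa>2 v \<and>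
      pick W (\<kappa>2 v) \<in> \<Union>(F ` Pow (W - {pick W (\<kappa>2 v)})) \<and>
      (\<not> W \<subseteq> I1 \<longrightarrow> \<not> W - {pick W (\<kappa>2 v)} \<subseteq> I1)"
    using pick[of W "\<kappa>2 v"] cW by blast
  then have x: "pick W (\<kappa>2 v) \<in> W" "pick W (\<kappa>2 v) \<in> \<Union>(F ` Pow (\<kappa>2 u))"
      "\<not> W \<subseteq> I1 \<longrightarrow> \<not> \<kappa>2 u \<subseteq> I1"
    unfolding ku[symmetric] by blast+
  have "\<kappa>2 v \<subseteq> insert (pick W (\<kappa>2 v)) (\<kappa>2 u)" using ku by (auto simp: W_def)
  then show "\<kappa>2 v \<subseteq> \<kappa>2 u \<union> \<Union>(F ` Pow (\<kappa>2 u))" using x(2) by blast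
  show "\<not> \<kappa>2 u \<union> \<kappa>2 v \<subseteq> I1 \<longrightarrow> \<not> \<kappa>2 u \<subseteq> I1" using x(3) by (simp add: W_def)
qed

lemma twist_support_K2: "twist_support u \<subseteq> K2"
  unfolding twist_support_def by blast

lemma finite_twist_support: "u \<in> K2 \<Longrightarrow> finite (twist_support u)"
proof -
  assume u: "u \<in> K2"
  have "finite (\<kappa>2 u)" using Nx.kappa_nsubsets u by (simp add: nsubsets_def)
  then have "finite (\<kappa>2 u \<union> \<Union>(F ` Pow (\<kappa>2 u)))"
    using kuratowski by (simp add: kuratowski_map_def)
  then have "finite {v\<in>K2. \<kappa>2 v \<subseteq> \<kappa>2 u \<union> \<Union>(F ` Pow (\<kappa>2 u))}"
    by (rule Nx.finite_stalks_within)
  moreover have "twist_support u \<subseteq> {v\<in>K2. \<kappa>2 v \<subseteq> \<kappa>2 u \<union> \<Union>(F ` Pow (\<kappa>2 u))}"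
    using twist_support_pick(1)[OF u] twist_support_K2 by blast
  ultimately show ?thesis by (rule finite_subset[rotated])
qed

lemma twist_support_K1: "u \<in> K1 \<Longrightarrow> twist_support u \<subseteq> K1"
proof
  fix v assume u: "u \<in> K1" and v: "v \<in> twist_support u"
  have "\<kappa>2 u \<subseteq> I1" "u \<in> K2" using K1_iff u by auto
  then have "\<kappa>2 u \<union> \<kappa>2 v \<subseteq> I1" using twist_support_pick(2) v by blast
  then show "v \<in> K1" using K1_iff twist_support_K2 v by blast
qed

lemma mem_twist_support_iff:
  assumes W: "finite W" "card W = Suc n" and uv: "u \<in> K2" "v \<in> K2" "u \<noteq> v"
    and sub: "\<kappa>2 u \<in> nsubsets n W" "\<kappa>2 v \<in> nsubsets n W"
  shows "v \<in> twist_support u \<longleftrightarrow> \<kappa>2 u = W - {pick W (\<kappa>2 v)} \<and> \<not> initial_Q v W"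
proof -
  have "\<kappa>2 u \<noteq> \<kappa>2 v" using uv Nx.kappa_inj by blast
  then have "\<kappa>2 u \<union> \<kappa>2 v = W" using nsubsets_Suc_Un[OF W sub] by blast
  then show ?thesis using uv W(2) by (simp add: twist_support_def)
qed

definition twist :: "'a \<Rightarrow> 'a" where
  "twist u = (if u \<in> K1
     then SOME \<gamma>. \<gamma> \<in> G1 \<and> (\<forall>v\<in>K1. ev1 \<gamma> v = (if v \<in> twist_support u then e1 else z1))
     else SOME \<gamma>. \<gamma> \<in> G2 \<and> (\<forall>v\<in>K2. ev2 \<gamma> v = (if v \<in> twist_support u then e2 else z2)))"

lemma twist_M: "u \<in> K1 \<Longrightarrow> twist u \<in> G1 \<and> (\<forall>v\<in>K1. ev1 (twist u) v = (if v \<in> twist_support u then e1 else z1))"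
proof -
  assume u: "u \<in> K1"
  then have "finite (twist_support u)" using finite_twist_support sorts_M_subset_N(2) by blast
  then have "\<exists>\<gamma>. \<gamma> \<in> G1 \<and> (\<forall>v\<in>K1. ev1 \<gamma> v = (if v \<in> twist_support u then e1 else z1))"
    using Mx.G_with_support twist_support_K1[OF u] by metis
  then show ?thesis unfolding twist_def if_P[OF u] by (rule someI_ex)
qed

lemma twist_N: "u \<in> K2 \<Longrightarrow> twist u \<in> G2 \<and> (\<forall>v\<in>K2. ev2 (twist u) v = (if v \<in> twist_support u then e2 else z2))"
proof (cases "u \<in> K1")
  case True
  have "ev2 (twist u) v = (if v \<in> twist_support u then e2 else z2)" if "v \<in> K2" for v
    using twist_M[OF True] that operations_M_N(3) e_M_N z_M_N twist_support_K1[OF True] ev_outside_M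
    by (cases "v \<in> K1") auto
  then show ?thesis using twist_M[OF True] sorts_M_subset_N(4) by blast
next
  case False
  assume u: "u \<in> K2"
  then have "\<exists>\<gamma>. \<gamma> \<in> G2 \<and> (\<forall>v\<in>K2. ev2 \<gamma> v = (if v \<in> twist_support u then e2 else z2))"
    using Nx.G_with_support finite_twist_support twist_support_K2 by metis
  then show ?thesis unfolding twist_def if_not_P[OF False] by (rule someI_ex)
qed

definition base_G :: "'a \<Rightarrow> 'a" where
  "base_G u = actg2 (twist u) (point_G u)"

lemma base_G_N: "u \<in> K2 \<Longrightarrow> base_G u \<in> Gs2 \<and> pg2 (base_G u) = u"
  using twist_N point_G_N Nx.actg_Gs Nx.pg_act by (simp add: base_G_def)

lemma base_G_M: "u \<in> K1 \<Longrightarrow> base_G u \<in> Gs1 \<and> pg1 (base_G u) = u"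
  using twist_M point_G_M Mx.actg_Gs Mx.pg_act operations_M_N(4) by (simp add: base_G_def)

end

context Kn_pair_kuratowski
begin

lemma length_filter_twist_support:
  assumes W: "W \<subseteq> I2" "finite W" "card W = Suc n" "\<kappa>2 v \<in> nsubsets n W" and v: "v \<in> K2"
    and us: "distinct us" "set us = {u\<in>K2. \<kappa>2 u \<subseteq> W \<and> u \<noteq> v}"
  shows "length (filter (\<lambda>u. v \<in> twist_support u) us) = (if initial_Q v W then 0 else 1)"
proof -
  define x where "x = pick W (\<kappa>2 v)"
  have x: "x \<in> W" "W - {x} \<noteq> \<kappa>2 v" using pick[OF W(1-3)] W(4) by (auto simp: nsubsets_def x_def)
  then have "W - {x} \<in> nsubsets n I2" using W(1-3) by (auto simp: nsubsets_def)
  then obtain u0 where u0: "u0 \<in> K2" "\<kappa>2 u0 = W - {x}" using Nx.kappa_surj by blast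
  then have u0_us: "u0 \<in> set us" using us(2) x(2) by auto
  have "v \<in> twist_support u \<longleftrightarrow> u = u0 \<and> \<not> initial_Q v W" if "u \<in> set us" for u
  proof -
    have u: "u \<in> K2" "u \<noteq> v" "\<kappa>2 u \<in> nsubsets n W"
      using that us(2) Nx.kappa_nsubsets by (auto simp: nsubsets_def)
    then have "v \<in> twist_support u \<longleftrightarrow> \<kappa>2 u = W - {x} \<and> \<not> initial_Q v W"
      using mem_twist_support_iff[OF W(2,3) u(1) v u(2,3) W(4)] by (simp add: x_def)
    also have "\<kappa>2 u = W - {x} \<longleftrightarrow> u = u0" using u0 u(1) Nx.kappa_inj by auto
    finally show ?thesis .
  qed
  then have "filter (\<lambda>u. v \<in> twist_support u) us = filter (\<lambda>u. u = u0 \<and> \<not> initial_Q v W) us"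
    by (intro filter_cong) auto
  moreover have "set (filter (\<lambda>u. u = u0) us) = {u0}" using u0_us by auto
  then have "length (filter (\<lambda>u. u = u0) us) = 1"
    using distinct_card[OF distinct_filter[OF us(1)], of "\<lambda>u. u = u0"] by simp
  ultimately show ?thesis by simp
qed

lemma Q_base_N:
  assumes us: "length us = n" "set us \<subseteq> K2" and v: "v \<in> K2"
    and c: "compat_idx n I2 (map \<kappa>2 us) (\<kappa>2 v)"
  shows "rel N SQ (map base_G us @ [point_H v])"
proof -
  obtain W where W: "W \<subseteq> I2" "finite W" "card W = Suc n" "\<kappa>2 v \<in> nsubsets n W"
    and dus: "distinct us" and set_us: "set us = {u\<in>K2. \<kappa>2 u \<subseteq> W \<and> u \<noteq> v}"
    using Nx.compat_idx_stalks[OF us v c] by blast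
  have "mset (stalk_list W v) = mset us"
    using set_eq_iff_mset_eq_distinct[of "stalk_list W v" us] stalk_list[OF W(2), of v] set_us dus
    by simp
  then have "mset (map point_G (stalk_list W v)) = mset (map point_G us)" by simp
  then have initial: "initial_Q v W \<longleftrightarrow> rel N SQ (map point_G us @ [point_H v])"
    unfolding initial_Q_def
    using Nx.Qsym[rule_format, of "map point_G us" "map point_G (stalk_list W v)" "point_H v"] us(1)
    by simp
  have "length (filter (\<lambda>\<gamma>. ev2 \<gamma> v = e2) (map twist us)) = length (filter (\<lambda>u. v \<in> twist_support u) us)"
    using us(2) twist_N v Nx.zne by (induction us) auto
  then have count: "length (filter (\<lambda>\<gamma>. ev2 \<gamma> v = e2) (map twist us)) = (if initial_Q v W then 0 else 1)"
    using length_filter_twist_support[OF W v dus set_us] by simp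
  have stalks: "map (\<kappa>2 \<circ> pg2) (map point_G us) = map \<kappa>2 us" using us(2) point_G_N by auto
  have "compat_idx n I2 (map (\<kappa>2 \<circ> pg2) (map point_G us)) (\<kappa>2 (ph2 (point_H v)))"
    unfolding stalks using c point_H_N[OF v] by simp
  then have "rel N SQ (map2 actg2 (map twist us) (map point_G us) @ [acth2 z2 (point_H v)]) \<longleftrightarrow>
      (rel N SQ (map point_G us @ [point_H v]) \<longleftrightarrow> even (length (filter (\<lambda>\<gamma>. ev2 \<gamma> (ph2 (point_H v)) = e2)
        (map twist us)) + (if z2 = e2 then 1 else 0)))"
    using us v point_G_N point_H_N twist_N Nx.z_H by (intro Nx.Q_actg_acth_iff) auto
  moreover have "map2 actg2 (map twist us) (map point_G us) = map base_G us"
    by (induction us) (auto simp: base_G_def)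
  ultimately show ?thesis using Nx.acth_z point_H_N[OF v] count initial Nx.zne by simp
qed

lemma Q_base_M:
  assumes us: "length us = n" "set us \<subseteq> K1" and v: "v \<in> K1"
    and c: "compat_idx n I1 (map \<kappa>1 us) (\<kappa>1 v)"
  shows "rel M SQ (map base_G us @ [point_H v])"
proof -
  have k: "map \<kappa>1 us = map \<kappa>2 us" "\<kappa>1 v = \<kappa>2 v" using us(2) v kappa_M_N by auto
  have "compat_idx n I2 (map \<kappa>2 us) (\<kappa>2 v)"
    using c sorts_M_subset_N(1) unfolding k compat_idx_def by blast
  then have "rel N SQ (map base_G us @ [point_H v])"
    using Q_base_N us v sorts_M_subset_N(2) by blast
  moreover have "set (map base_G us @ [point_H v]) \<subseteq> univ M"
    using base_G_M point_H_M us(2) v Mx.Gs_univ Mx.Hs_univ by auto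
  ultimately show ?thesis using rel_M_iff_rel_N by blast
qed

lemma Kn_based_N: "Kn_based n N I2 K2 H2 G2 Gs2 Hs2 \<kappa>2 z2 e2 hadd2 gadd2 ev2 actg2 acth2 pg2 ph2 base_G point_H"
  by (intro Kn_based.intro Nx.Kn_model_axioms Kn_based_axioms.intro base_G_N point_H_N Q_base_N)

lemma Kn_based_M: "Kn_based n M I1 K1 H1 G1 Gs1 Hs1 \<kappa>1 z1 e1 hadd1 gadd1 ev1 actg1 acth1 pg1 ph1 base_G point_H"
  by (intro Kn_based.intro Mx.Kn_model_axioms Kn_based_axioms.intro base_G_M point_H_M Q_base_M)

end

sublocale Kn_pair_kuratowski \<subseteq>
  NB: Kn_based n N I2 K2 H2 G2 Gs2 Hs2 \<kappa>2 z2 e2 hadd2 gadd2 ev2 actg2 acth2 pg2 ph2 base_G point_H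
  by (rule Kn_based_N)

sublocale Kn_pair_kuratowski \<subseteq>
  MB: Kn_based n M I1 K1 H1 G1 Gs1 Hs1 \<kappa>1 z1 e1 hadd1 gadd1 ev1 actg1 acth1 pg1 ph1 base_G point_H
  by (rule Kn_based_M)

context Kn_pair_kuratowski
begin

lemma support_M_N_eq: "\<gamma> \<in> G1 \<Longrightarrow> MB.support \<gamma> = NB.support \<gamma>"
proof -
  assume \<gamma>: "\<gamma> \<in> G1"
  have "{u\<in>K2. ev2 \<gamma> u = e2} = {u\<in>K1. ev1 \<gamma> u = e1}"
    using support_M_N[OF \<gamma>] sorts_M_subset_N(2) operations_M_N(3)[OF \<gamma>] e_M_N by auto
  then show ?thesis using kappa_M_N by (auto simp: MB.support_def NB.support_def)
qed

lemma std_map_M_N: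
  assumes "x \<in> univ M"
  shows "MB.std_map x = NB.std_map x"
proof (cases rule: MB.std_map_cases[OF assms])
  case 5
  then have x: "x \<in> Gs2" "pg1 x = pg2 x" "pg1 x \<in> K1"
    using sorts_M_subset_N(5) operations_M_N(6) Mx.pg_K by auto
  have "MB.coordG x \<in> G1" "actg1 (MB.coordG x) (base_G (pg1 x)) = x" using MB.coordG 5 by auto
  then have "NB.coordG x = MB.coordG x"
    using NB.coordG_unique[OF x(1)] operations_M_N(4) base_G_M[OF x(3)] x(2) sorts_M_subset_N(4) by auto
  then show ?thesis using 5 NB.std_map_Gs x support_M_N_eq MB.coordG kappa_M_N by auto
next
  case 6
  then have x: "x \<in> Hs2" "ph1 x = ph2 x" "ph1 x \<in> K1"
    using sorts_M_subset_N(6) operations_M_N(7) Mx.ph_K by auto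
  have "MB.coordH x \<in> H1" "acth1 (MB.coordH x) (point_H (ph1 x)) = x" using MB.coordH 6 by auto
  then have "NB.coordH x = MB.coordH x"
    using NB.coordH_unique[OF x(1)] operations_M_N(5) point_H_M[OF x(3)] x(2) sorts_M_subset_N(3) by auto
  then show ?thesis using 6 NB.std_map_Hs x e_M_N kappa_M_N by auto
qed (use sorts_M_subset_N NB.std_map_I NB.std_map_K NB.std_map_H NB.std_map_G kappa_M_N e_M_N
      support_M_N_eq in auto)

lemma iso_std_map_M: "iso NB.std_map M (std n I1)"
proof -
  have "iso MB.std_map M (std n I1)" by (rule MB.iso_std_map)
  moreover have "map NB.std_map xs = map MB.std_map xs" if "set xs \<subseteq> univ M" for xs
    using std_map_M_N that by auto
  ultimately show ?thesis
    unfolding iso_def using std_map_M_N bij_betw_cong[of "univ M" NB.std_map MB.std_map] by metis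
qed

end

theorem standard_iso_of_kuratowski_map:
  assumes "in_Kn n M" "in_Kn n N" "elem_sub M N" "0 < n" "kuratowski_map (n - 1) (univ N) F"
  shows "\<exists>f. iso f N (std n (sortset N SI)) \<and> (\<forall>i\<in>sortset N SI. f i = EI i)
             \<and> iso f M (std n (sortset M SI))"
proof -
  obtain z1 e1 hadd1 gadd1 ev1 actg1 acth1 pg1 ph1 where
    "Kn_model n M (sortset M SI) (sortset M SK) (sortset M SH) (sortset M SG) (sortset M SGs) (sortset M SHs)
       (\<lambda>u. {i\<in>sortset M SI. rel M SMem [i, u]}) z1 e1 hadd1 gadd1 ev1 actg1 acth1 pg1 ph1"
    using in_Kn_imp_Kn_model[OF assms(1)] by blast
  moreover obtain z2 e2 hadd2 gadd2 ev2 actg2 acth2 pg2 ph2 where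
    "Kn_model n N (sortset N SI) (sortset N SK) (sortset N SH) (sortset N SG) (sortset N SGs) (sortset N SHs)
       (\<lambda>u. {i\<in>sortset N SI. rel N SMem [i, u]}) z2 e2 hadd2 gadd2 ev2 actg2 acth2 pg2 ph2"
    using in_Kn_imp_Kn_model[OF assms(2)] by blast
  ultimately interpret Kn_pair_kuratowski n M "sortset M SI" "sortset M SK" "sortset M SH" "sortset M SG"
      "sortset M SGs" "sortset M SHs" "\<lambda>u. {i\<in>sortset M SI. rel M SMem [i, u]}"
      z1 e1 hadd1 gadd1 ev1 actg1 acth1 pg1 ph1
      N "sortset N SI" "sortset N SK" "sortset N SH" "sortset N SG" "sortset N SGs" "sortset N SHs"
      "\<lambda>u. {i\<in>sortset N SI. rel N SMem [i, u]}" z2 e2 hadd2 gadd2 ev2 actg2 acth2 pg2 ph2 F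
    using assms(3-5) by (intro Kn_pair_kuratowski.intro Kn_pair.intro Kn_pair_axioms.intro
        Kn_pair_kuratowski_axioms.intro)
  show ?thesis using NB.iso_std_map NB.std_map_I iso_std_map_M by blast
qed

theorem lemma3p11:
  fixes n :: nat and M N :: "('a, hs_sym) rstr"
  assumes "3 \<le> n"
    and "in_Kn n M" and "in_Kn n N"
    and "elem_sub M N"
    and "le_aleph (n - 3) (univ M)" and "le_aleph (n - 3) (univ N)"
  shows "\<exists>f. iso f N (std n (sortset N SI)) \<and> (\<forall>i\<in>sortset N SI. f i = EI i)
             \<and> iso f M (std n (sortset M SI))"
proof -
  obtain F where "kuratowski_map (n - 3 + 2) (univ N) F"
    using kuratowski_map_le_aleph[OF assms(6)] by blast
  moreover have "n - 3 + 2 = n - 1" using assms(1) by simp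
  ultimately show ?thesis
    using standard_iso_of_kuratowski_map[OF assms(2-4)] assms(1) by simp
qed

end
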